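(* For every $M \geq 1$ there exist $\delta,\epsilon > 0$, depending only on $M$, such that the following holds. Let $f \colon (\mathbb{W},d_{\mathrm{par}}) \to (\mathbb{H},d)$ be an $M$-bilipschitz map, let $\theta \in [-\pi/2,\pi/2)$, and let $Q \in \mathcal{D}$ satisfy $\beta_{f}(\mathbb{V};Q) < \epsilon$ for some vertical plane $\mathbb{V} \subset \mathbb{H}$ with $\angle(\mathbb{V},\mathbb{W}_{\theta}) = 0$. Then $\mathcal{H}^{3}(\Pi_{\theta}(f(Q))) \geq \delta\mathcal{H}^{3}(Q)$.
   Context: $\mathbb{H}$ is $\mathbb{R}^{3}$ with group law $(x_{1},y_{1},t_{1}) \cdot (x_{2},y_{2},t_{2}) = (x_{1}+x_{2},y_{1}+y_{2},t_{1}+t_{2}+\tfrac{1}{2}(x_{1}y_{2}-x_{2}y_{1}))$, metric $d(p,q) = \|q^{-1}\cdot p\|$ with $\|(x,y,t)\| = \max\{\sqrt{x^{2}+y^{2}},\sqrt{|t|}\}$, $N(E,\delta) = \{p : \operatorname{dist}(p,E) \leq \delta\}$; $\mathcal{H}^{3}$ is $3$-dimensional Hausdorff measure (w.r.t. $d$ on $\mathbb{H}$ and $d_{\mathrm{par}}$ on $\mathbb{W}$). Horizontal lines in $\mathbb{H}$: sets $p \cdot \{(sa,sb,0) : s \in \mathbb{R}\}$, $(a,b) \neq 0$. Vertical planes: sets $\{(x,y,t) : (x,y) \in \lambda\}$, $\lambda \subset \mathbb{R}^{2}$ an affine line. $R_{\theta}(z,t) = (e^{i\theta}z,t)$ with $z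 = x+iy$; $\mathbb{W}_{\theta} = R_{\theta}(\{(0,y,t)\})$; $\Pi(x,y,t) = (0,y,t+\tfrac{1}{2}xy)$ and $\Pi_{\theta} = R_{\theta} \circ \Pi \circ R_{\theta}^{-1}$. A horizontal line not contained in a left translate of the $xt$-plane can be written uniquely as $\{(ay+b,y,\tfrac{1}{2}by+c)\}$; its slope is $|a|$ ($\infty$ otherwise); $\angle(\mathbb{V})$ is the slope of any horizontal line in $\mathbb{V}$, and $\angle(\mathbb{V},\mathbb{W}_{\theta}) := \angle(R_{\theta}^{-1}\mathbb{V})$. $\mathbb{W}$ is $\mathbb{R}^{2}$ with $d_{\mathrm{par}}((y,t),(\xi,\tau)) = \max\{|y-\xi|,|t-\tau|^{1/2}\}$; horizontal lines in $\mathbb{W}$ are $\mathbb{R}\times\{t\}$. $\mathcal{D}$: dyadic parabolic rectangles $Q = [k2^{-n},(k+1)2^{-n}) \times [l4^{-n},(l+1)4^{-n})$, $\ell(Q) = 2^{-n}$. $\beta_{f}(\mathbb{V};Q)$ is the infimum of $\epsilon > 0$ such that for every horizontal line $\ell \subset \mathbb{W}$ there is a horizontal line $L \subset \mathbb{V}$ with $f(\ell \cap Q) \subset N(L,\epsilon\ell(Q))$. *)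

theory Defs
  imports "HOL-Analysis.Analysis"
begin

type_synonym heis = "real \<times> real \<times> real"
type_synonym wpt = "real \<times> real"

definition heis_mult :: "heis \<Rightarrow> heis \<Rightarrow> heis" where
  "heis_mult p q = (case p of (x1, y1, t1) \<Rightarrow> case q of (x2, y2, t2) \<Rightarrow>
      (x1 + x2, y1 + y2, t1 + t2 + (x1 * y2 - x2 * y1) / 2))"

definition heis_inv :: "heis \<Rightarrow> heis" where
  "heis_inv p = (case p of (x, y, t) \<Rightarrow> (-x, -y, -t))"

definition heis_norm :: "heis \<Rightarrow> real" where
  "heis_norm p = (case p of (x, y, t) \<Rightarrow> max (sqrt (x\<^sup>2 + y\<^sup>2)) (sqrt \<bar>t\<bar>))"

definition heis_dist :: "heis \<Rightarrow> heis \<Rightarrow> real" where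
  "heis_dist p q = heis_norm (heis_mult (heis_inv q) p)"

definition dpar :: "wpt \<Rightarrow> wpt \<Rightarrow> real" where
  "dpar a b = (case a of (y, t) \<Rightarrow> case b of (\<xi>, \<tau>) \<Rightarrow> max \<bar>y - \<xi>\<bar> (sqrt \<bar>t - \<tau>\<bar>))"

definition heis_setdist :: "heis \<Rightarrow> heis set \<Rightarrow> real" where
  "heis_setdist p E = Inf ((\<lambda>q. heis_dist p q) ` E)"

definition heis_nbhd :: "heis set \<Rightarrow> real \<Rightarrow> heis set" where
  "heis_nbhd E \<delta> = {p. heis_setdist p E \<le> \<delta>}"

definition heis_hline :: "heis set \<Rightarrow> bool" where
  "heis_hline L \<longleftrightarrow> (\<exists>p a b. (a, b) \<noteq> (0, 0) \<and>
      L = {heis_mult p (s * a, s * b, 0) | s. True})"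

definition vertical_plane :: "heis set \<Rightarrow> bool" where
  "vertical_plane V \<longleftrightarrow> (\<exists>a b c. (a, b) \<noteq> (0::real, 0::real) \<and>
      V = {(x, y, t). a * x + b * y = c})"

definition rot :: "real \<Rightarrow> heis \<Rightarrow> heis" where
  "rot \<theta> p = (case p of (x, y, t) \<Rightarrow>
      (cos \<theta> * x - sin \<theta> * y, sin \<theta> * x + cos \<theta> * y, t))"

definition W_theta :: "real \<Rightarrow> heis set" where
  "W_theta \<theta> = rot \<theta> ` {(0, y, t) | y t. True}"

definition proj_Pi :: "heis \<Rightarrow> heis" where
  "proj_Pi p = (case p of (x, y, t) \<Rightarrow> (0, y, t + x * y / 2))"

definition proj_Pi_theta :: "real \<Rightarrow> heis \<Rightarrow> heis" where
  "proj_Pi_theta \<theta> = rot \<theta> \<circ> proj_Pi \<circ> rot (-\<theta>)"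

definition hline_form :: "real \<Rightarrow> real \<Rightarrow> real \<Rightarrow> heis set" where
  "hline_form a b c = {(a * y + b, y, b * y / 2 + c) | y. True}"

definition hline_slope :: "heis set \<Rightarrow> ereal" where
  "hline_slope L = (if \<exists>a b c. L = hline_form a b c
      then ereal \<bar>THE a. \<exists>b c. L = hline_form a b c\<bar> else \<infinity>)"

definition vplane_angle :: "heis set \<Rightarrow> ereal" where
  "vplane_angle V = hline_slope (SOME L. heis_hline L \<and> L \<subseteq> V)"

definition vplane_angle_W :: "heis set \<Rightarrow> real \<Rightarrow> ereal" where
  "vplane_angle_W V \<theta> = vplane_angle (rot (-\<theta>) ` V)"

definition dyadic_rect :: "int \<Rightarrow> int \<Rightarrow> int \<Rightarrow> wpt set" where
  "dyadic_rect k l n =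
     {real_of_int k * 2 powr (- real_of_int n) ..< real_of_int (k + 1) * 2 powr (- real_of_int n)}
   \<times> {real_of_int l * 4 powr (- real_of_int n) ..< real_of_int (l + 1) * 4 powr (- real_of_int n)}"

definition side_len :: "int \<Rightarrow> real" where
  "side_len n = 2 powr (- real_of_int n)"

definition W_hline :: "real \<Rightarrow> wpt set" where
  "W_hline t = UNIV \<times> {t}"

definition beta :: "(wpt \<Rightarrow> heis) \<Rightarrow> heis set \<Rightarrow> int \<Rightarrow> int \<Rightarrow> int \<Rightarrow> ereal" where
  "beta f V k l n = Inf {ereal \<epsilon> | \<epsilon>. \<epsilon> > 0 \<and>
      (\<forall>t. \<exists>L. heis_hline L \<and> L \<subseteq> V \<and>
          f ` (W_hline t \<inter> dyadic_rect k l n) \<subseteq> heis_nbhd L (\<epsilon> * side_len n))}"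

definition bilipschitz :: "real \<Rightarrow> (wpt \<Rightarrow> heis) \<Rightarrow> bool" where
  "bilipschitz M f \<longleftrightarrow> (\<forall>p q. dpar p q / M \<le> heis_dist (f p) (f q)
                               \<and> heis_dist (f p) (f q) \<le> M * dpar p q)"

definition mdiam :: "('a \<Rightarrow> 'a \<Rightarrow> real) \<Rightarrow> 'a set \<Rightarrow> ennreal" where
  "mdiam d E = (SUP x\<in>E. SUP y\<in>E. ennreal (d x y))"

definition hausdorff_content :: "('a \<Rightarrow> 'a \<Rightarrow> real) \<Rightarrow> real \<Rightarrow> real \<Rightarrow> 'a set \<Rightarrow> ennreal" where
  "hausdorff_content d s \<delta> A = (INF C \<in> {C :: nat \<Rightarrow> 'a set.
        A \<subseteq> (\<Union>i. C i) \<and> (\<forall>i. mdiam d (C i) \<le> ennreal \<delta>)}.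
      (\<Sum>i. ennreal (enn2real (mdiam d (C i)) powr s)))"

definition hausdorff_measure :: "('a \<Rightarrow> 'a \<Rightarrow> real) \<Rightarrow> real \<Rightarrow> 'a set \<Rightarrow> ennreal" where
  "hausdorff_measure d s A = (SUP \<delta> \<in> {0<..}. hausdorff_content d s \<delta> A)"

end

theory Submission
  imports Defs
begin

(* Rotating by -theta turns V into a plane {x = B}. On that plane the coordinates
   (y, t + x y / 2 - B y) are an isometry onto (W, d_par) whose second coordinate is
   constant along horizontal lines. If beta_f(V; Q) is small, every slice of Q is mapped
   close to one horizontal line of V, so in these coordinates f becomes a continuous map
   of Q that is co-Lipschitz up to a small additive error and almost constant in the
   second coordinate on slices. The intermediate value theorem and the Poincare-Miranda
   theorem (derived from Brouwer's theorem) then show that its image contains a parabolic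
   rectangle of size l(Q)/M x l(Q)^2/M^6. Read in the same coordinates, Pi_theta is a
   shear, which preserves Lebesgue measure; Lebesgue measure is dominated by the
   3-dimensional Hausdorff measure of d_par, and H^3(Q) <= l(Q)^3. *)

section \<open>The Heisenberg metric\<close>

lemma dpar_eq: "dpar u v = max \<bar>fst u - fst v\<bar> (sqrt \<bar>snd u - snd v\<bar>)"
  by (cases u, cases v) (simp add: dpar_def)

lemma heis_dist_eq:
  "heis_dist (x1, y1, t1) (x2, y2, t2) =
     max (sqrt ((x1 - x2)\<^sup>2 + (y1 - y2)\<^sup>2)) (sqrt \<bar>t1 - t2 + (x1 * y2 - x2 * y1) / 2\<bar>)"
  unfolding heis_dist_def heis_norm_def heis_mult_def heis_inv_def
  by (simp add: power2_commute algebra_simps)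

lemma heis_norm_nonneg: "heis_norm p \<ge> 0"
  unfolding heis_norm_def by (auto split: prod.splits simp: le_max_iff_disj)

lemma heis_dist_nonneg: "heis_dist p q \<ge> 0"
  unfolding heis_dist_def by (rule heis_norm_nonneg)

lemma heis_dist_commute: "heis_dist p q = heis_dist q p"
proof (cases p, cases q)
  fix x1 y1 t1 x2 y2 t2 assume pq: "p = (x1, y1, t1)" "q = (x2, y2, t2)"
  have "\<bar>t2 - t1 + (x2 * y1 - x1 * y2) / 2\<bar> = \<bar>t1 - t2 + (x1 * y2 - x2 * y1) / 2\<bar>"
  proof -
    have "t2 - t1 + (x2 * y1 - x1 * y2) / 2 = - (t1 - t2 + (x1 * y2 - x2 * y1) / 2)"
      by (simp add: field_simps)
    then show ?thesis by (metis abs_minus_cancel)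
  qed
  then show ?thesis
    by (simp only: pq heis_dist_eq power2_commute[of x2] power2_commute[of y2])
qed

lemma abs_cross_product_le:
  "\<bar>x1 * y2 - x2 * y1\<bar> \<le> sqrt (x1\<^sup>2 + y1\<^sup>2) * sqrt (x2\<^sup>2 + y2\<^sup>2)"
proof -
  have "(x1\<^sup>2 + y1\<^sup>2) * (x2\<^sup>2 + y2\<^sup>2) = (x1 * y2 - x2 * y1)\<^sup>2 + (x1 * x2 + y1 * y2)\<^sup>2"
    by (simp add: power2_eq_square algebra_simps)
  then have "sqrt ((x1 * y2 - x2 * y1)\<^sup>2) \<le> sqrt ((x1\<^sup>2 + y1\<^sup>2) * (x2\<^sup>2 + y2\<^sup>2))"
    by (intro real_sqrt_le_mono) simp
  then show ?thesis by (simp add: real_sqrt_mult)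
qed

lemma heis_norm_mult_le: "heis_norm (heis_mult p q) \<le> heis_norm p + heis_norm q"
proof -
  obtain x1 y1 t1 x2 y2 t2 where pq: "p = (x1, y1, t1)" "q = (x2, y2, t2)"
    by (cases p, cases q) auto
  define e1 where "e1 = sqrt (x1\<^sup>2 + y1\<^sup>2)"
  define e2 where "e2 = sqrt (x2\<^sup>2 + y2\<^sup>2)"
  define n1 where "n1 = heis_norm p"
  define n2 where "n2 = heis_norm q"
  have n1: "e1 \<le> n1" "sqrt \<bar>t1\<bar> \<le> n1" and n2: "e2 \<le> n2" "sqrt \<bar>t2\<bar> \<le> n2"
    by (simp_all add: n1_def n2_def e1_def e2_def pq heis_norm_def)
  have e0: "0 \<le> e1" "0 \<le> e2"
    by (simp_all add: e1_def e2_def)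
  have t: "\<bar>t1\<bar> \<le> n1\<^sup>2" "\<bar>t2\<bar> \<le> n2\<^sup>2"
    using n1(2) n2(2) by (simp_all add: sqrt_le_D)
  have n0: "0 \<le> n1" "0 \<le> n2"
    using e0 n1(1) n2(1) by linarith+
  have "\<bar>x1 * y2 - x2 * y1\<bar> \<le> e1 * e2"
    unfolding e1_def e2_def by (rule abs_cross_product_le)
  also have "\<dots> \<le> n1 * n2"
    using n1(1) n2(1) e0 by (intro mult_mono) auto
  finally have cross: "\<bar>x1 * y2 - x2 * y1\<bar> \<le> n1 * n2" .
  have "\<bar>t1 + t2 + (x1 * y2 - x2 * y1) / 2\<bar> \<le> \<bar>t1\<bar> + \<bar>t2\<bar> + \<bar>x1 * y2 - x2 * y1\<bar> / 2"
    using abs_triangle_ineq[of "t1 + t2" "(x1 * y2 - x2 * y1) / 2"] abs_triangle_ineq[of t1 t2]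
    by simp
  also have "\<dots> \<le> n1\<^sup>2 + n2\<^sup>2 + n1 * n2 / 2"
    using t cross by simp
  also have "\<dots> \<le> (n1 + n2)\<^sup>2"
    using n0 by (simp add: power2_eq_square algebra_simps)
  finally have "sqrt \<bar>t1 + t2 + (x1 * y2 - x2 * y1) / 2\<bar> \<le> n1 + n2"
    using n0 by (simp add: real_le_lsqrt)
  moreover have "sqrt ((x1 + x2)\<^sup>2 + (y1 + y2)\<^sup>2) \<le> n1 + n2"
    using real_sqrt_sum_squares_triangle_ineq[of x1 x2 y1 y2] n1(1) n2(1)
    unfolding e1_def e2_def by linarith
  moreover have "heis_norm (heis_mult p q) = max (sqrt ((x1 + x2)\<^sup>2 + (y1 + y2)\<^sup>2))
      (sqrt \<bar>t1 + t2 + (x1 * y2 - x2 * y1) / 2\<bar>)"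
    by (simp add: pq heis_mult_def heis_norm_def)
  ultimately show ?thesis
    by (simp add: n1_def n2_def)
qed

lemma heis_dist_triangle: "heis_dist p r \<le> heis_dist p q + heis_dist q r"
proof -
  have "heis_mult (heis_inv r) p = heis_mult (heis_mult (heis_inv r) q) (heis_mult (heis_inv q) p)"
    by (cases p, cases q, cases r) (simp add: heis_mult_def heis_inv_def field_simps)
  then show ?thesis
    unfolding heis_dist_def using heis_norm_mult_le by (metis add.commute)
qed

lemma abs_fst_diff_le_heis_dist: "\<bar>fst p - fst q\<bar> \<le> heis_dist p q"
  by (cases p, cases q) (simp add: heis_dist_eq le_max_iff_disj real_sqrt_ge_abs1)

lemma abs_fst_snd_diff_le_heis_dist: "\<bar>fst (snd p) - fst (snd q)\<bar> \<le> heis_dist p q"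
  by (cases p, cases q) (simp add: heis_dist_eq le_max_iff_disj real_sqrt_ge_abs2)

lemma abs_vertical_diff_le_heis_dist_sq:
  "\<bar>snd (snd p) - snd (snd q) + (fst p * fst (snd q) - fst q * fst (snd p)) / 2\<bar>
     \<le> (heis_dist p q)\<^sup>2"
proof (cases p, cases q)
  fix x1 y1 t1 x2 y2 t2 assume pq: "p = (x1, y1, t1)" "q = (x2, y2, t2)"
  have "sqrt \<bar>t1 - t2 + (x1 * y2 - x2 * y1) / 2\<bar> \<le> heis_dist p q"
    by (simp add: pq heis_dist_eq)
  then show ?thesis
    by (simp add: pq sqrt_le_D)
qed

lemma tendsto_dpar_0: "((\<lambda>v. dpar v w) \<longlongrightarrow> 0) (at w)"
proof -
  have "continuous (at w) (\<lambda>v. max \<bar>fst v - fst w\<bar> (sqrt \<bar>snd v - snd w\<bar>))"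
    by (intro continuous_intros)
  then show ?thesis
    by (simp add: continuous_at dpar_eq)
qed

lemma tendsto_of_heis_dist_tendsto_0:
  assumes lim: "((\<lambda>z. heis_dist (g z) p) \<longlongrightarrow> 0) F"
  shows "(g \<longlongrightarrow> p) F"
proof -
  have x: "((\<lambda>z. fst (g z)) \<longlongrightarrow> fst p) F"
    by (rule LIM_zero_cancel, rule Lim_null_comparison[OF _ lim], intro always_eventually allI)
      (simp add: abs_fst_diff_le_heis_dist)
  have y: "((\<lambda>z. fst (snd (g z))) \<longlongrightarrow> fst (snd p)) F"
    by (rule LIM_zero_cancel, rule Lim_null_comparison[OF _ lim], intro always_eventually allI)
      (simp add: abs_fst_snd_diff_le_heis_dist)
  define C where "C z = (fst (g z) * fst (snd p) - fst p * fst (snd (g z))) / 2" for z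
  define D where "D z = snd (snd (g z)) - snd (snd p) + C z" for z
  have "(D \<longlongrightarrow> 0) F"
  proof (rule Lim_null_comparison)
    show "\<forall>\<^sub>F z in F. norm (D z) \<le> (heis_dist (g z) p)\<^sup>2"
      using abs_vertical_diff_le_heis_dist_sq[of "g _" p]
      by (intro always_eventually allI) (simp add: D_def C_def)
    show "((\<lambda>z. (heis_dist (g z) p)\<^sup>2) \<longlongrightarrow> 0) F"
      using tendsto_power[OF lim, of 2] by simp
  qed
  moreover have "(C \<longlongrightarrow> (fst p * fst (snd p) - fst p * fst (snd p)) / 2) F"
    unfolding C_def by (intro tendsto_divide tendsto_diff tendsto_mult x y tendsto_const) simp
  ultimately have "((\<lambda>z. D z - C z) \<longlongrightarrow> 0) F"
    using tendsto_diff by fastforce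
  then have "((\<lambda>z. snd (snd (g z)) - snd (snd p)) \<longlongrightarrow> 0) F"
    by (simp only: D_def add_diff_cancel_right')
  then have t: "((\<lambda>z. snd (snd (g z))) \<longlongrightarrow> snd (snd p)) F"
    by (rule LIM_zero_cancel)
  show ?thesis
    using tendsto_Pair[OF x tendsto_Pair[OF y t]] by simp
qed

lemma continuous_on_lipschitz_into_heis:
  assumes "\<And>w w'. heis_dist (g w) (g w') \<le> M * dpar w w'"
  shows "continuous_on UNIV g"
proof (intro continuous_at_imp_continuous_on ballI)
  fix w
  have "((\<lambda>v. heis_dist (g v) (g w)) \<longlongrightarrow> 0) (at w)"
    by (rule Lim_null_comparison[OF _ tendsto_mult_right_zero[OF tendsto_dpar_0[of w], of M]],
        intro always_eventually allI) (simp add: assms heis_dist_nonneg)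
  then show "isCont g w"
    unfolding isCont_def by (rule tendsto_of_heis_dist_tendsto_0)
qed

section \<open>Rotations and vertical planes\<close>

lemma rot_eq: "rot \<theta> (x, y, t) = (cos \<theta> * x - sin \<theta> * y, sin \<theta> * x + cos \<theta> * y, t)"
  by (simp add: rot_def)

lemma rot_rot: "rot \<alpha> (rot \<beta> p) = rot (\<alpha> + \<beta>) p"
  by (cases p) (simp add: rot_eq cos_add sin_add algebra_simps)

lemma rot_0: "rot 0 p = p"
  by (cases p) (simp add: rot_eq)

lemma rot_inverse: "rot \<theta> (rot (-\<theta>) p) = p" "rot (-\<theta>) (rot \<theta> p) = p"
  by (simp_all add: rot_rot rot_0)

lemma rotation_invariants:
  fixes \<theta> x y x' y' :: real
  shows
  "(cos \<theta> * x - sin \<theta> * y) * (sin \<theta> * x' + cos \<theta> * y')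
     - (cos \<theta> * x' - sin \<theta> * y') * (sin \<theta> * x + cos \<theta> * y) = x * y' - x' * y"
  "(cos \<theta> * x - sin \<theta> * y)\<^sup>2 + (sin \<theta> * x + cos \<theta> * y)\<^sup>2 = x\<^sup>2 + y\<^sup>2"
proof -
  have "(c * x - s * y) * (s * x' + c * y') - (c * x' - s * y') * (s * x + c * y)
          = (s\<^sup>2 + c\<^sup>2) * (x * y' - x' * y)"
    "(c * x - s * y)\<^sup>2 + (s * x + c * y)\<^sup>2 = (s\<^sup>2 + c\<^sup>2) * (x\<^sup>2 + y\<^sup>2)" for c s :: real
    by (simp_all add: power2_eq_square algebra_simps)
  then show
    "(cos \<theta> * x - sin \<theta> * y) * (sin \<theta> * x' + cos \<theta> * y')
       - (cos \<theta> * x' - sin \<theta> * y') * (sin \<theta> * x + cos \<theta> * y) = x * y' - x' * y"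
    "(cos \<theta> * x - sin \<theta> * y)\<^sup>2 + (sin \<theta> * x + cos \<theta> * y)\<^sup>2 = x\<^sup>2 + y\<^sup>2"
    by simp_all
qed

lemma rot_heis_mult: "rot \<theta> (heis_mult p q) = heis_mult (rot \<theta> p) (rot \<theta> q)"
proof (cases p, cases q)
  fix x y t x' y' t' assume pq: "p = (x, y, t)" "q = (x', y', t')"
  show ?thesis
    unfolding pq rot_eq heis_mult_def prod.case rotation_invariants(1)
    by (simp add: algebra_simps)
qed

lemma heis_dist_rot: "heis_dist (rot \<theta> p) (rot \<theta> q) = heis_dist p q"
proof (cases p, cases q)
  fix x y t x' y' t' assume pq: "p = (x, y, t)" "q = (x', y', t')"
  have "(cos \<theta> * x - sin \<theta> * y - (cos \<theta> * x' - sin \<theta> * y'))\<^sup>2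
          + (sin \<theta> * x + cos \<theta> * y - (sin \<theta> * x' + cos \<theta> * y'))\<^sup>2
        = (x - x')\<^sup>2 + (y - y')\<^sup>2"
    using rotation_invariants(2)[of \<theta> "x - x'" "y - y'"] by (simp add: algebra_simps)
  then show ?thesis
    by (simp only: pq rot_eq heis_dist_eq rotation_invariants(1))
qed

lemma bilipschitz_rot: "bilipschitz M f \<Longrightarrow> bilipschitz M (rot \<theta> \<circ> f)"
  by (simp add: bilipschitz_def heis_dist_rot)

lemma bilipschitzD:
  assumes "bilipschitz M f" "0 < M"
  shows "heis_dist (f p) (f q) \<le> M * dpar p q" "dpar p q \<le> M * heis_dist (f p) (f q)"
proof -
  have "dpar p q / M \<le> heis_dist (f p) (f q)" "heis_dist (f p) (f q) \<le> M * dpar p q"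
    using assms(1) unfolding bilipschitz_def by blast+
  then show "heis_dist (f p) (f q) \<le> M * dpar p q" "dpar p q \<le> M * heis_dist (f p) (f q)"
    using assms(2) by (simp_all add: pos_divide_le_eq mult.commute)
qed

lemma heis_hline_rot:
  assumes "heis_hline L"
  shows "heis_hline (rot \<theta> ` L)"
proof -
  obtain p a b where ab: "(a, b) \<noteq> (0, 0)" and L: "L = {heis_mult p (s * a, s * b, 0) | s. True}"
    using assms unfolding heis_hline_def by blast
  define a' where "a' = cos \<theta> * a - sin \<theta> * b"
  define b' where "b' = sin \<theta> * a + cos \<theta> * b"
  have "rot (-\<theta>) (a', b', 0) = (a, b, 0)"
    using rot_inverse(2)[of \<theta> "(a, b, 0)"] by (simp add: rot_eq a'_def b'_def)
  then have "(a', b') \<noteq> (0, 0)"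
    using ab by (auto simp: rot_eq)
  moreover have "rot \<theta> (s * a, s * b, 0) = (s * a', s * b', 0)" for s
    by (simp add: rot_eq a'_def b'_def algebra_simps)
  then have "rot \<theta> ` L = {heis_mult (rot \<theta> p) (s * a', s * b', 0) | s. True}"
    by (simp add: L full_SetCompr_eq image_image rot_heis_mult)
  ultimately show ?thesis
    unfolding heis_hline_def by blast
qed

lemma mem_rot_image_iff: "p \<in> rot \<theta> ` V \<longleftrightarrow> rot (-\<theta>) p \<in> V"
  by (metis image_eqI rot_inverse imageE)

lemma vertical_plane_rot:
  assumes "vertical_plane V"
  shows "vertical_plane (rot \<theta> ` V)"
proof -
  obtain a b c where ab: "(a, b) \<noteq> (0::real, 0::real)" and V: "V = {(x, y, t). a * x + b * y = c}"
    using assms unfolding vertical_plane_def by blast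
  define a' where "a' = cos \<theta> * a - sin \<theta> * b"
  define b' where "b' = sin \<theta> * a + cos \<theta> * b"
  have "a'\<^sup>2 + b'\<^sup>2 = a\<^sup>2 + b\<^sup>2"
    unfolding a'_def b'_def by (rule rotation_invariants(2))
  then have "(a', b') \<noteq> (0, 0)"
    using ab by auto
  moreover have "rot \<theta> ` V = {(x, y, t). a' * x + b' * y = c}"
  proof (intro set_eqI)
    fix p :: heis
    obtain x y t where p: "p = (x, y, t)" by (cases p)
    have "a * fst (rot (-\<theta>) p) + b * fst (snd (rot (-\<theta>) p)) = a' * x + b' * y"
      by (simp add: p rot_eq a'_def b'_def algebra_simps)
    moreover have "rot (-\<theta>) p \<in> V \<longleftrightarrow> a * fst (rot (-\<theta>) p) + b * fst (snd (rot (-\<theta>) p)) = c"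
      by (cases "rot (-\<theta>) p") (simp add: V)
    ultimately show "p \<in> rot \<theta> ` V \<longleftrightarrow> p \<in> {(x, y, t). a' * x + b' * y = c}"
      by (simp add: mem_rot_image_iff p)
  qed
  ultimately show ?thesis
    unfolding vertical_plane_def by blast
qed

lemma vertical_plane_contains_hline:
  assumes "vertical_plane V"
  shows "\<exists>L. heis_hline L \<and> L \<subseteq> V"
proof -
  obtain a b c where ab: "(a, b) \<noteq> (0::real, 0::real)" and V: "V = {(x, y, t). a * x + b * y = c}"
    using assms unfolding vertical_plane_def by blast
  obtain p where p: "p \<in> V"
  proof (cases "a = 0")
    case True
    then show ?thesis using that[of "(0, c / b, 0)"] ab by (simp add: V)
  next
    case False
    then show ?thesis using that[of "(c / a, 0, 0)"] by (simp add: V)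
  qed
  define L where "L = {heis_mult p (s * (- b), s * a, 0) | s. True}"
  have "heis_hline L"
    unfolding heis_hline_def L_def using ab by (intro exI[of _ p] exI[of _ "- b"] exI[of _ a]) auto
  moreover obtain x y t where "p = (x, y, t)" "a * x + b * y = c"
    using p by (cases p) (auto simp: V)
  then have "L \<subseteq> V"
    by (auto simp: L_def V heis_mult_def algebra_simps)
  ultimately show ?thesis by blast
qed

lemma hline_form_slope_unique:
  assumes "hline_form a b c = hline_form a' b' c'"
  shows "a = a'"
proof -
  have "(b, 0, c) \<in> hline_form a' b' c'"
    unfolding assms[symmetric] by (force simp: hline_form_def)
  then have "b = b'"
    by (auto simp: hline_form_def)
  have "(a + b, 1, b / 2 + c) \<in> hline_form a b c"
    unfolding hline_form_def by (rule CollectI, rule exI[of _ 1]) simp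
  then have "(a + b, 1, b / 2 + c) \<in> hline_form a' b' c'"
    using assms by simp
  then have "a + b = a' + b'"
    by (auto simp: hline_form_def)
  with \<open>b = b'\<close> show ?thesis by simp
qed

lemma hline_slope_eq_0:
  assumes "hline_slope L = 0"
  shows "\<exists>b c. L = hline_form 0 b c"
proof -
  have ex: "\<exists>a b c. L = hline_form a b c"
  proof (rule ccontr)
    assume "\<nexists>a b c. L = hline_form a b c"
    then have "hline_slope L = \<infinity>"
      by (simp add: hline_slope_def)
    with assms show False by simp
  qed
  then obtain a b c where L: "L = hline_form a b c"
    by blast
  then have "(THE a. \<exists>b c. L = hline_form a b c) = a"
    using hline_form_slope_unique by blast
  then have "hline_slope L = ereal \<bar>a\<bar>"
    unfolding hline_slope_def by (simp only: ex if_True)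
  then show ?thesis
    using assms L by auto
qed

lemma vertical_plane_angle_eq_0:
  assumes "vertical_plane V" "vplane_angle V = 0"
  shows "\<exists>B. V \<subseteq> {p. fst p = B}"
proof -
  obtain a b c where ab: "(a, b) \<noteq> (0::real, 0::real)" and V: "V = {(x, y, t). a * x + b * y = c}"
    using assms(1) unfolding vertical_plane_def by blast
  define L where "L = (SOME L. heis_hline L \<and> L \<subseteq> V)"
  have "L \<subseteq> V"
    using someI_ex[OF vertical_plane_contains_hline[OF assms(1)]] unfolding L_def by blast
  moreover obtain b0 c0 where "L = hline_form 0 b0 c0"
    using hline_slope_eq_0 assms(2) unfolding vplane_angle_def L_def by blast
  ultimately have "(b0, 0, c0) \<in> V" "(b0, 1, b0 / 2 + c0) \<in> V"
    unfolding hline_form_def by (force, force)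
  then have "b = 0" "a \<noteq> 0"
    using ab by (auto simp: V)
  then have "V \<subseteq> {p. fst p = c / a}"
    by (auto simp: V field_simps)
  then show ?thesis by blast
qed

lemma vplane_angle_W_eq_0:
  assumes "vertical_plane V" "vplane_angle_W V \<theta> = 0"
  shows "\<exists>B. rot (-\<theta>) ` V \<subseteq> {p. fst p = B}"
  using assms vertical_plane_angle_eq_0 vertical_plane_rot
  unfolding vplane_angle_W_def by blast

section \<open>Coordinates on a vertical plane\<close>

lemma dpar_le_perturbed:
  assumes "0 \<le> e"
    and "\<bar>(fst u - fst v) - (fst u' - fst v')\<bar> \<le> e"
    and "\<bar>(snd u - snd v) - (snd u' - snd v')\<bar> \<le> e\<^sup>2"
  shows "dpar u v \<le> dpar u' v' + e"
proof -
  have "sqrt \<bar>snd u - snd v\<bar> \<le> sqrt (\<bar>snd u' - snd v'\<bar> + e\<^sup>2)"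
    using assms(3) by (intro real_sqrt_le_mono) linarith
  also have "\<dots> \<le> sqrt \<bar>snd u' - snd v'\<bar> + e"
    using assms(1) sqrt_add_le_add_sqrt[of "\<bar>snd u' - snd v'\<bar>" "e\<^sup>2"] by simp
  finally show ?thesis
    using assms(2) unfolding dpar_eq by linarith
qed

(* t + x y / 2 is the vertical coordinate of Pi; subtracting B y makes the horizontal lines
   of the plane {x = B} level sets of the second coordinate. *)
definition plane_chart :: "real \<Rightarrow> heis \<Rightarrow> wpt" where
  "plane_chart B p = (case p of (x, y, t) \<Rightarrow> (y, t + x * y / 2 - B * y))"

lemma plane_chart_eq: "plane_chart B (x, y, t) = (y, t + x * y / 2 - B * y)"
  by (simp add: plane_chart_def)

lemma fst_plane_chart [simp]: "fst (plane_chart B p) = fst (snd p)"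
  by (cases p) (simp add: plane_chart_eq)

lemma continuous_on_plane_chart: "continuous_on S (plane_chart B)"
proof -
  have "plane_chart B = (\<lambda>p. (fst (snd p), snd (snd p) + fst p * fst (snd p) / 2 - B * fst (snd p)))"
    by (auto simp: plane_chart_def fun_eq_iff split: prod.splits)
  then show ?thesis
    by (simp add: continuous_intros)
qed

lemma heis_dist_plane_chart:
  assumes "fst q = B" "fst q' = B"
  shows "heis_dist q q' = dpar (plane_chart B q) (plane_chart B q')"
proof -
  obtain y t y' t' where q: "q = (B, y, t)" "q' = (B, y', t')"
    using assms by (cases q, cases q') auto
  have e: "t + B * y / 2 - B * y - (t' + B * y' / 2 - B * y') = t - t' + (B * y' - B * y) / 2"
    by (simp add: field_simps)
  show ?thesis
    unfolding q heis_dist_eq plane_chart_eq dpar_def prod.case e by simp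
qed

lemma plane_chart_near_plane:
  assumes "fst q = B" "heis_dist p q \<le> \<rho>"
  shows "\<bar>fst (plane_chart B p) - fst (plane_chart B q)\<bar> \<le> \<rho>"
    and "\<bar>snd (plane_chart B p) - snd (plane_chart B q)\<bar> \<le> 2 * \<rho>\<^sup>2"
proof -
  obtain x y t where p: "p = (x, y, t)" by (cases p)
  obtain \<eta> \<tau> where q: "q = (B, \<eta>, \<tau>)" using assms(1) by (cases q) auto
  have d: "heis_dist p q \<le> \<rho>" by fact
  then show "\<bar>fst (plane_chart B p) - fst (plane_chart B q)\<bar> \<le> \<rho>"
    using abs_fst_snd_diff_le_heis_dist[of p q] by (simp add: p q plane_chart_eq)
  define w where "w = t - \<tau> + (x * \<eta> - B * y) / 2"
  have "\<bar>w\<bar> \<le> (heis_dist p q)\<^sup>2"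
    using abs_vertical_diff_le_heis_dist_sq[of p q] by (simp add: p q w_def)
  also have "\<dots> \<le> \<rho>\<^sup>2"
    using d heis_dist_nonneg[of p q] by (intro power_mono)
  finally have "\<bar>w\<bar> \<le> \<rho>\<^sup>2" .
  moreover have "\<bar>x - B\<bar> * \<bar>y - \<eta>\<bar> \<le> \<rho> * \<rho>"
    using abs_fst_diff_le_heis_dist[of p q] abs_fst_snd_diff_le_heis_dist[of p q] d
    by (intro mult_mono) (auto simp: p q)
  then have "\<bar>(x - B) * (y - \<eta>)\<bar> \<le> \<rho>\<^sup>2"
    by (simp add: abs_mult power2_eq_square)
  moreover have "snd (plane_chart B p) - snd (plane_chart B q) = w + (x - B) * (y - \<eta>) / 2"
    by (simp add: p q w_def plane_chart_eq field_simps)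
  moreover have "\<bar>w + (x - B) * (y - \<eta>) / 2\<bar> \<le> \<bar>w\<bar> + \<bar>(x - B) * (y - \<eta>)\<bar> / 2"
    using abs_triangle_ineq[of w "(x - B) * (y - \<eta>) / 2"] by simp
  ultimately show "\<bar>snd (plane_chart B p) - snd (plane_chart B q)\<bar> \<le> 2 * \<rho>\<^sup>2"
    by simp
qed

lemma heis_dist_le_dpar_plane_chart:
  assumes "fst q = B" "fst q' = B" "heis_dist p q \<le> \<rho>" "heis_dist p' q' \<le> \<rho>"
  shows "heis_dist p p' \<le> dpar (plane_chart B p) (plane_chart B p') + 4 * \<rho>"
proof -
  have "0 \<le> \<rho>" using assms(3) heis_dist_nonneg order_trans by blast
  note near = plane_chart_near_plane[OF assms(1,3)] plane_chart_near_plane[OF assms(2,4)]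
  have "heis_dist p p' \<le> heis_dist p q + heis_dist q q' + heis_dist q' p'"
    using heis_dist_triangle[of p p' q] heis_dist_triangle[of q p' q'] by linarith
  also have "\<dots> \<le> dpar (plane_chart B q) (plane_chart B q') + 2 * \<rho>"
    using assms heis_dist_commute[of q' p'] heis_dist_plane_chart[OF assms(1,2)] by linarith
  also have "dpar (plane_chart B q) (plane_chart B q') \<le> dpar (plane_chart B p) (plane_chart B p') + 2 * \<rho>"
    using near \<open>0 \<le> \<rho>\<close> by (intro dpar_le_perturbed) (auto simp: power2_eq_square)
  finally show ?thesis by linarith
qed

lemma plane_chart_const_on_hline:
  assumes L: "heis_hline L" "L \<subseteq> {p. fst p = B}" and "q \<in> L" "q' \<in> L"
  shows "snd (plane_chart B q) = snd (plane_chart B q')"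
proof -
  obtain p a b where Ld: "L = {heis_mult p (s * a, s * b, 0) | s. True}"
    using L(1) unfolding heis_hline_def by blast
  have "heis_mult p (0 * a, 0 * b, 0) \<in> L" "heis_mult p (1 * a, 1 * b, 0) \<in> L"
    unfolding Ld by blast+
  then have "fst p = B" "fst p + a = B"
    using L(2) by (auto simp: heis_mult_def split: prod.splits)
  then obtain y t where p: "p = (B, y, t)" and "a = 0"
    by (cases p) auto
  then have "snd (plane_chart B z) = t - B * y / 2" if "z \<in> L" for z
    using that by (auto simp: Ld p heis_mult_def plane_chart_eq field_simps)
  then show ?thesis using assms(3,4) by simp
qed

lemma plane_chart_proj_Pi:
  "plane_chart 0 (proj_Pi p)
     = (fst (plane_chart B p), snd (plane_chart B p) + B * fst (plane_chart B p))"
  by (cases p) (simp add: proj_Pi_def plane_chart_eq)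

lemma plane_chart_snd_close_on_hline:
  assumes "heis_hline L" "L \<subseteq> {p. fst p = B}" "q \<in> L" "q' \<in> L"
    and "heis_dist p q \<le> \<rho>" "heis_dist p' q' \<le> \<rho>"
  shows "\<bar>snd (plane_chart B p) - snd (plane_chart B p')\<bar> \<le> (2 * \<rho>)\<^sup>2"
proof -
  have "\<bar>snd (plane_chart B p) - snd (plane_chart B q)\<bar> \<le> 2 * \<rho>\<^sup>2"
    "\<bar>snd (plane_chart B p') - snd (plane_chart B q')\<bar> \<le> 2 * \<rho>\<^sup>2"
    using assms(2-6) by (auto intro!: plane_chart_near_plane(2))
  moreover have "snd (plane_chart B q) = snd (plane_chart B q')"
    by (rule plane_chart_const_on_hline[OF assms(1-4)])
  ultimately show ?thesis
    by (simp add: power_mult_distrib abs_le_iff)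
qed

section \<open>Maps that are almost constant on horizontal slices\<close>

lemma poincare_miranda_2d:
  fixes F1 F2 :: "real \<times> real \<Rightarrow> real"
  assumes ab: "a1 \<le> b1" "a2 \<le> b2"
    and cont: "continuous_on ({a1..b1} \<times> {a2..b2}) F1" "continuous_on ({a1..b1} \<times> {a2..b2}) F2"
    and F1: "\<And>t. t \<in> {a2..b2} \<Longrightarrow> F1 (a1, t) \<le> 0 \<and> 0 \<le> F1 (b1, t)"
    and F2: "\<And>y. y \<in> {a1..b1} \<Longrightarrow> F2 (y, a2) \<le> 0 \<and> 0 \<le> F2 (y, b2)"
  shows "\<exists>p \<in> {a1..b1} \<times> {a2..b2}. F1 p = 0 \<and> F2 p = 0"
proof -
  define S where "S = {a1..b1} \<times> {a2..b2}"
  \<comment> \<open>By the sign conditions on the edges, clamping can only fix a point at which both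
     functions vanish.\<close>
  define G where "G p = (max a1 (min b1 (fst p - F1 p)), max a2 (min b2 (snd p - F2 p)))" for p
  have "continuous_on S G"
    unfolding G_def S_def by (intro continuous_intros cont)
  moreover have "G \<in> S \<rightarrow> S" "S \<noteq> {}"
    unfolding G_def S_def using ab by auto
  moreover have "compact S" "convex S"
    unfolding S_def by (simp_all add: compact_Times convex_Times)
  ultimately obtain p where p: "p \<in> S" "G p = p"
    using brouwer[of S G] by blast
  obtain y t where yt: "p = (y, t)" by (cases p)
  have "y \<in> {a1..b1}" "t \<in> {a2..b2}"
    using p(1) yt S_def by auto
  moreover have "max a1 (min b1 (y - F1 p)) = y" "max a2 (min b2 (t - F2 p)) = t"
    using p(2) yt unfolding G_def by auto
  ultimately have "F1 p \<le> 0 \<or> y = a1" "0 \<le> F1 p \<or> y = b1"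
    and "F2 p \<le> 0 \<or> t = a2" "0 \<le> F2 p \<or> t = b2"
    by (auto simp: max_def min_def split: if_splits)
  then have "F1 p = 0" "F2 p = 0"
    using F1[of t] F2[of y] \<open>y \<in> {a1..b1}\<close> \<open>t \<in> {a2..b2}\<close> yt by fastforce+
  then show ?thesis
    using p(1) S_def by blast
qed

(* Modelled on the plane chart of a bilipschitz map whose horizontal slices stay close to
   horizontal lines of a vertical plane; the constants are those produced by
   beta < 1 / (128 M^3). *)
locale slice_flat_map =
  fixes \<Phi> :: "wpt \<Rightarrow> wpt" and M r y0 t0 :: real
  assumes M_ge_1: "1 \<le> M" and r_pos: "0 < r"
    and continuous: "continuous_on UNIV \<Phi>"
    and fst_lipschitz: "\<And>w w'. \<bar>fst (\<Phi> w) - fst (\<Phi> w')\<bar> \<le> M * dpar w w'"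
    and co_lipschitz: "\<And>w w'. w \<in> {y0..<y0 + r} \<times> {t0..<t0 + r\<^sup>2} \<Longrightarrow>
           w' \<in> {y0..<y0 + r} \<times> {t0..<t0 + r\<^sup>2} \<Longrightarrow>
           dpar w w' \<le> M * dpar (\<Phi> w) (\<Phi> w') + r / (32 * M\<^sup>2)"
    and flat_slices: "\<And>w w'. w \<in> {y0..<y0 + r} \<times> {t0..<t0 + r\<^sup>2} \<Longrightarrow>
           w' \<in> {y0..<y0 + r} \<times> {t0..<t0 + r\<^sup>2} \<Longrightarrow> snd w = snd w' \<Longrightarrow>
           \<bar>snd (\<Phi> w) - snd (\<Phi> w')\<bar> \<le> (r / (64 * M ^ 3))\<^sup>2"
begin

(* The topological argument runs on the box {y0..y1} x {t0..t1}, whose height is chosen so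
   that the first coordinate drifts by at most r / (8 M) along vertical segments. *)
abbreviation "y1 \<equiv> y0 + r / 2"
abbreviation "t1 \<equiv> t0 + (r / (8 * M\<^sup>2))\<^sup>2"

lemma M_pos [simp]: "0 < M"
  using M_ge_1 by simp

lemma div_M_power_pos [simp]: "0 < c \<Longrightarrow> 0 < r / (c * M ^ k)"
  using r_pos by simp

lemma div_M_power_nonneg [simp]: "0 < c \<Longrightarrow> 0 \<le> r / (c * M ^ k)"
  by (rule less_imp_le) (rule div_M_power_pos)

lemma div_M_power_le: "0 < c \<Longrightarrow> r / (c * M ^ k) \<le> r / c"
  using r_pos M_ge_1 by (intro divide_left_mono) (auto simp: one_le_power)

lemma subbox_height_lt: "(r / (8 * M\<^sup>2))\<^sup>2 < r\<^sup>2"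
proof -
  have "r / (8 * M\<^sup>2) < r"
    using div_M_power_le[of 8 2] r_pos by simp
  then show ?thesis
    using r_pos by (intro power_strict_mono) auto
qed

lemma subbox_subset: "{y0..y1} \<times> {t0..t1} \<subseteq> {y0..<y0 + r} \<times> {t0..<t0 + r\<^sup>2}"
  using subbox_height_lt r_pos by auto

lemma continuous_on_fst_snd:
  "continuous_on S (\<lambda>w. fst (\<Phi> w))" "continuous_on S (\<lambda>w. snd (\<Phi> w))"
  using continuous_on_subset[OF continuous] by (auto intro: continuous_intros)

lemma fst_vertical_drift:
  assumes "t0 \<le> t" "t \<le> t1"
  shows "\<bar>fst (\<Phi> (y, t)) - fst (\<Phi> (y, t0))\<bar> \<le> r / (8 * M)"
proof -
  have "sqrt \<bar>t - t0\<bar> \<le> r / (8 * M\<^sup>2)"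
    using assms r_pos M_pos by (intro real_le_lsqrt) auto
  then have "M * dpar (y, t) (y, t0) \<le> M * (r / (8 * M\<^sup>2))"
    using M_pos by (simp add: dpar_eq del: times_divide_eq_right)
  also have "\<dots> = r / (8 * M)"
    using M_pos by (simp add: power2_eq_square)
  finally show ?thesis
    using fst_lipschitz[of "(y, t)" "(y, t0)"] by linarith
qed

lemma fst_bottom_gap: "29 / 64 * (r / M) \<le> \<bar>fst (\<Phi> (y1, t0)) - fst (\<Phi> (y0, t0))\<bar>"
proof -
  let ?d = "dpar (\<Phi> (y0, t0)) (\<Phi> (y1, t0))"
  let ?A = "\<bar>fst (\<Phi> (y0, t0)) - fst (\<Phi> (y1, t0))\<bar>"
  have box: "(y0, t0) \<in> {y0..<y0 + r} \<times> {t0..<t0 + r\<^sup>2}" "(y1, t0) \<in> {y0..<y0 + r} \<times> {t0..<t0 + r\<^sup>2}"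
    using r_pos subbox_height_lt by auto
  have "sqrt \<bar>snd (\<Phi> (y0, t0)) - snd (\<Phi> (y1, t0))\<bar> \<le> r / (64 * M ^ 3)"
    using flat_slices[OF box] by (intro real_le_lsqrt) (auto intro: less_imp_le)
  then have "?d \<le> ?A + r / (64 * M ^ 3)"
    by (auto simp: dpar_eq)
  then have "M * ?d \<le> M * (?A + r / (64 * M ^ 3))"
    by (intro mult_left_mono) (simp_all add: less_imp_le)
  also have "\<dots> = M * ?A + r / (64 * M\<^sup>2)"
    by (simp add: distrib_left power2_eq_square power3_eq_cube)
  finally have "M * ?d \<le> M * ?A + r / (64 * M\<^sup>2)" .
  moreover have "r / (64 * M\<^sup>2) \<le> r / 64" "r / (32 * M\<^sup>2) \<le> r / 32"
    by (intro div_M_power_le, simp)+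
  moreover have "r / 2 \<le> M * ?d + r / (32 * M\<^sup>2)"
    using co_lipschitz[OF box] r_pos by (simp add: dpar_eq)
  ultimately have "29 * r / 64 \<le> M * ?A"
    by simp
  then show ?thesis
    by (simp add: field_simps abs_minus_commute)
qed

lemma fst_edges_separated:
  "\<exists>\<sigma> Ys. \<sigma> \<noteq> 0 \<and> (\<forall>t \<in> {t0..t1}. \<forall>Y \<in> {Ys - r / (16 * M) .. Ys + r / (16 * M)}.
      \<sigma> * (fst (\<Phi> (y0, t)) - Y) \<le> 0 \<and> 0 \<le> \<sigma> * (fst (\<Phi> (y1, t)) - Y))"
proof -
  define A0 where "A0 = fst (\<Phi> (y0, t0))"
  define A1 where "A1 = fst (\<Phi> (y1, t0))"
  define u where "u = r / M"
  define \<sigma> where "\<sigma> = sgn (A1 - A0)"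
  define G where "G = \<bar>A1 - A0\<bar>"
  have u_pos: "0 < u"
    using r_pos by (simp add: u_def)
  have gap: "29 / 64 * u \<le> G"
    using fst_bottom_gap by (simp add: A0_def A1_def u_def G_def)
  then have "\<sigma> * (A1 - A0) = G" "\<sigma> \<noteq> 0"
    using u_pos by (auto simp: \<sigma>_def G_def sgn_if)
  moreover have \<sigma>_bound: "\<sigma> * z \<le> \<bar>z\<bar>" "- \<bar>z\<bar> \<le> \<sigma> * z" for z
    by (auto simp: \<sigma>_def sgn_if)
  moreover have "\<sigma> * (fst (\<Phi> (y0, t)) - Y) \<le> 0 \<and> 0 \<le> \<sigma> * (fst (\<Phi> (y1, t)) - Y)"
    if "t \<in> {t0..t1}" "Y \<in> {(A0 + A1) / 2 - r / (16 * M) .. (A0 + A1) / 2 + r / (16 * M)}" for t Y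
  proof -
    have drift: "\<bar>fst (\<Phi> (y0, t)) - A0\<bar> \<le> u / 8" "\<bar>fst (\<Phi> (y1, t)) - A1\<bar> \<le> u / 8"
      and centre: "\<bar>(A0 + A1) / 2 - Y\<bar> \<le> u / 16"
      using fst_vertical_drift[of t] that by (auto simp: A0_def A1_def u_def abs_le_iff mult.commute)
    define d0 where "d0 = \<sigma> * (fst (\<Phi> (y0, t)) - A0)"
    define d1 where "d1 = \<sigma> * (fst (\<Phi> (y1, t)) - A1)"
    define c where "c = \<sigma> * ((A0 + A1) / 2 - Y)"
    have bounds: "d0 \<le> u / 8" "- (u / 8) \<le> d1" "c \<le> u / 16" "- (u / 16) \<le> c"
      using \<sigma>_bound[of "fst (\<Phi> (y0, t)) - A0"] \<sigma>_bound[of "fst (\<Phi> (y1, t)) - A1"]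
        \<sigma>_bound[of "(A0 + A1) / 2 - Y"] drift centre
      by (auto simp: d0_def d1_def c_def abs_le_iff)
    have "\<sigma> * (fst (\<Phi> (y0, t)) - Y) = d0 + c - G / 2"
      unfolding d0_def c_def \<open>\<sigma> * (A1 - A0) = G\<close>[symmetric] by (simp add: field_simps)
    also have "\<dots> \<le> 0"
      using bounds gap u_pos by linarith
    finally have left: "\<sigma> * (fst (\<Phi> (y0, t)) - Y) \<le> 0" .
    have "0 \<le> d1 + c + G / 2"
      using bounds gap u_pos by linarith
    also have "\<dots> = \<sigma> * (fst (\<Phi> (y1, t)) - Y)"
      unfolding d1_def c_def \<open>\<sigma> * (A1 - A0) = G\<close>[symmetric] by (simp add: field_simps)
    finally have "0 \<le> \<sigma> * (fst (\<Phi> (y1, t)) - Y)" .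
    with left show ?thesis ..
  qed
  ultimately show ?thesis
    by blast
qed

lemma fst_crossing:
  assumes "\<sigma> \<noteq> 0" "\<sigma> * (fst (\<Phi> (y0, t)) - c) \<le> 0" "0 \<le> \<sigma> * (fst (\<Phi> (y1, t)) - c)"
  shows "\<exists>y \<in> {y0..y1}. fst (\<Phi> (y, t)) = c"
proof -
  have "continuous_on {y0..y1} (\<lambda>y. \<sigma> * (fst (\<Phi> (y, t)) - c))"
    by (intro continuous_intros continuous_on_compose2[OF continuous_on_fst_snd(1)]) auto
  then obtain y where "y0 \<le> y" "y \<le> y1" "\<sigma> * (fst (\<Phi> (y, t)) - c) = 0"
    using IVT'[of "\<lambda>y. \<sigma> * (fst (\<Phi> (y, t)) - c)" y0 0 y1] assms(2,3) r_pos by auto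
  then show ?thesis
    using assms(1) by auto
qed

lemma snd_edges_gap:
  assumes "ya \<in> {y0..y1}" "yb \<in> {y0..y1}" "fst (\<Phi> (ya, t0)) = fst (\<Phi> (yb, t1))"
  shows "34 * (r / (64 * M ^ 3))\<^sup>2 \<le> \<bar>snd (\<Phi> (y0, t1)) - snd (\<Phi> (y0, t0))\<bar>"
proof -
  define v where "v = r / (64 * M ^ 3)"
  have v_pos: "0 < v"
    using r_pos M_pos by (simp add: v_def)
  have box: "(ya, t0) \<in> {y0..<y0 + r} \<times> {t0..<t0 + r\<^sup>2}" "(yb, t1) \<in> {y0..<y0 + r} \<times> {t0..<t0 + r\<^sup>2}"
    "(y0, t0) \<in> {y0..<y0 + r} \<times> {t0..<t0 + r\<^sup>2}" "(y0, t1) \<in> {y0..<y0 + r} \<times> {t0..<t0 + r\<^sup>2}"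
    using assms(1,2) r_pos subbox_height_lt by auto
  have "r / (8 * M\<^sup>2) \<le> dpar (ya, t0) (yb, t1)"
    using r_pos M_pos by (simp add: dpar_eq)
  also have "\<dots> \<le> M * sqrt \<bar>snd (\<Phi> (ya, t0)) - snd (\<Phi> (yb, t1))\<bar> + r / (32 * M\<^sup>2)"
    using co_lipschitz[OF box(1,2)] assms(3) by (simp add: dpar_eq)
  finally have "M * (6 * v) \<le> M * sqrt \<bar>snd (\<Phi> (ya, t0)) - snd (\<Phi> (yb, t1))\<bar>"
    using M_pos by (simp add: v_def field_simps power3_eq_cube power2_eq_square)
  then have "6 * v \<le> sqrt \<bar>snd (\<Phi> (ya, t0)) - snd (\<Phi> (yb, t1))\<bar>"
    by simp
  then have "(6 * v)\<^sup>2 \<le> \<bar>snd (\<Phi> (ya, t0)) - snd (\<Phi> (yb, t1))\<bar>"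
    using power_mono[of "6 * v" _ 2] v_pos by fastforce
  moreover have "\<bar>snd (\<Phi> (ya, t0)) - snd (\<Phi> (y0, t0))\<bar> \<le> v\<^sup>2"
    "\<bar>snd (\<Phi> (yb, t1)) - snd (\<Phi> (y0, t1))\<bar> \<le> v\<^sup>2"
    using flat_slices box by (simp_all add: v_def)
  ultimately show ?thesis
    unfolding v_def[symmetric] by (simp add: power2_eq_square abs_le_iff) linarith
qed

lemma snd_edges_separated:
  assumes "\<sigma> \<noteq> 0"
    and "\<forall>t \<in> {t0..t1}. \<sigma> * (fst (\<Phi> (y0, t)) - Ys) \<le> 0 \<and> 0 \<le> \<sigma> * (fst (\<Phi> (y1, t)) - Ys)"
  shows "\<exists>\<tau> Ts. \<tau> \<noteq> 0 \<and> (\<forall>y \<in> {y0..y1}. \<forall>T \<in> {Ts .. Ts + r\<^sup>2 / (128 * M ^ 6)}.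
      \<tau> * (snd (\<Phi> (y, t0)) - T) \<le> 0 \<and> 0 \<le> \<tau> * (snd (\<Phi> (y, t1)) - T))"
proof -
  have crossing: "\<exists>y \<in> {y0..y1}. fst (\<Phi> (y, t)) = Ys" if "t \<in> {t0..t1}" for t
    using assms(2) that by (intro fst_crossing[OF assms(1)]) auto
  obtain ya where ya: "ya \<in> {y0..y1}" "fst (\<Phi> (ya, t0)) = Ys"
    using crossing[of t0] by auto
  obtain yb where yb: "yb \<in> {y0..y1}" "fst (\<Phi> (yb, t1)) = Ys"
    using crossing[of t1] by auto
  define v where "v = r / (64 * M ^ 3)"
  define Ta where "Ta = snd (\<Phi> (y0, t0))"
  define Tb where "Tb = snd (\<Phi> (y0, t1))"
  define \<tau> :: real where "\<tau> = (if Ta \<le> Tb then 1 else -1)"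
  define Ts where "Ts = min Ta Tb + v\<^sup>2"
  have gap: "34 * v\<^sup>2 \<le> \<bar>Tb - Ta\<bar>"
    using snd_edges_gap[OF ya(1) yb(1)] ya(2) yb(2) by (simp add: v_def Ta_def Tb_def)
  have height: "r\<^sup>2 / (128 * M ^ 6) = 32 * v\<^sup>2"
    by (simp add: v_def power2_eq_square field_simps)
  have "\<tau> * (snd (\<Phi> (y, t0)) - T) \<le> 0 \<and> 0 \<le> \<tau> * (snd (\<Phi> (y, t1)) - T)"
    if "y \<in> {y0..y1}" "T \<in> {Ts .. Ts + r\<^sup>2 / (128 * M ^ 6)}" for y T
  proof -
    have "\<bar>snd (\<Phi> (y, t0)) - Ta\<bar> \<le> v\<^sup>2" "\<bar>snd (\<Phi> (y, t1)) - Tb\<bar> \<le> v\<^sup>2"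
      using that(1) flat_slices r_pos subbox_height_lt by (auto simp: Ta_def Tb_def v_def)
    then show ?thesis
      using that(2) gap by (auto simp: \<tau>_def Ts_def height abs_le_iff)
  qed
  moreover have "\<tau> \<noteq> 0"
    by (simp add: \<tau>_def)
  ultimately show ?thesis
    by blast
qed

lemma rectangle_subset_image:
  "\<exists>Ys Ts. {Ys - r / (16 * M) .. Ys + r / (16 * M)} \<times> {Ts .. Ts + r\<^sup>2 / (128 * M ^ 6)}
      \<subseteq> \<Phi> ` ({y0..<y0 + r} \<times> {t0..<t0 + r\<^sup>2})"
proof -
  obtain \<sigma> Ys where \<sigma>: "\<sigma> \<noteq> 0" and fst_edges: "\<forall>t \<in> {t0..t1}. \<forall>Y \<in> {Ys - r / (16 * M) .. Ys + r / (16 * M)}.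
      \<sigma> * (fst (\<Phi> (y0, t)) - Y) \<le> 0 \<and> 0 \<le> \<sigma> * (fst (\<Phi> (y1, t)) - Y)"
    using fst_edges_separated by (elim exE conjE)
  have "Ys \<in> {Ys - r / (16 * M) .. Ys + r / (16 * M)}"
    using r_pos by (simp add: less_imp_le)
  then have "\<forall>t \<in> {t0..t1}. \<sigma> * (fst (\<Phi> (y0, t)) - Ys) \<le> 0 \<and> 0 \<le> \<sigma> * (fst (\<Phi> (y1, t)) - Ys)"
    using fst_edges by blast
  from snd_edges_separated[OF \<sigma> this] obtain \<tau> Ts where \<tau>: "\<tau> \<noteq> 0" and snd_edges: "\<forall>y \<in> {y0..y1}. \<forall>T \<in> {Ts .. Ts + r\<^sup>2 / (128 * M ^ 6)}.
      \<tau> * (snd (\<Phi> (y, t0)) - T) \<le> 0 \<and> 0 \<le> \<tau> * (snd (\<Phi> (y, t1)) - T)"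
    by (elim exE conjE)
  have "(Y, T) \<in> \<Phi> ` ({y0..<y0 + r} \<times> {t0..<t0 + r\<^sup>2})"
    if "Y \<in> {Ys - r / (16 * M) .. Ys + r / (16 * M)}" "T \<in> {Ts .. Ts + r\<^sup>2 / (128 * M ^ 6)}" for Y T
  proof -
    have "\<exists>p \<in> {y0..y1} \<times> {t0..t1}. \<sigma> * (fst (\<Phi> p) - Y) = 0 \<and> \<tau> * (snd (\<Phi> p) - T) = 0"
    proof (rule poincare_miranda_2d)
      show "continuous_on ({y0..y1} \<times> {t0..t1}) (\<lambda>p. \<sigma> * (fst (\<Phi> p) - Y))"
        "continuous_on ({y0..y1} \<times> {t0..t1}) (\<lambda>p. \<tau> * (snd (\<Phi> p) - T))"
        by (intro continuous_intros continuous_on_fst_snd)+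
    qed (use fst_edges snd_edges that r_pos in auto)
    then obtain p where "p \<in> {y0..y1} \<times> {t0..t1}" "\<Phi> p = (Y, T)"
      using \<sigma> \<tau> by (auto simp: prod_eq_iff)
    then show ?thesis
      using subbox_subset by (intro image_eqI[of _ _ p]) auto
  qed
  then show ?thesis
    by blast
qed

end

section \<open>Hausdorff measures\<close>

lemma mdiam_mono: "S \<subseteq> T \<Longrightarrow> mdiam d S \<le> mdiam d T"
  unfolding mdiam_def by (intro SUP_subset_mono) auto

lemma mdiam_image_le:
  assumes "\<And>x y. x \<in> S \<Longrightarrow> y \<in> S \<Longrightarrow> d' (\<phi> x) (\<phi> y) \<le> d x y"
  shows "mdiam d' (\<phi> ` S) \<le> mdiam d S"
  unfolding mdiam_def using assms
  by (auto intro!: SUP_mono ennreal_leI simp: SUP_image)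

lemma mdiam_le_imp_dist_le:
  assumes "x \<in> S" "y \<in> S" "mdiam d S \<le> ennreal D"
  shows "d x y \<le> enn2real (mdiam d S)"
proof -
  have "ennreal (d x y) \<le> mdiam d S"
    unfolding mdiam_def by (rule SUP_upper2[OF assms(1)], rule SUP_upper2[OF assms(2)]) simp
  then have "enn2real (ennreal (d x y)) \<le> enn2real (mdiam d S)"
    using assms(3) by (intro enn2real_mono) (auto simp: top.not_eq_extremum le_less_trans)
  then show ?thesis
  proof (cases "0 \<le> d x y")
    case False
    then show ?thesis
      using enn2real_nonneg[of "mdiam d S"] by linarith
  qed simp
qed

lemma ennreal_enn2real_powr_mono:
  assumes "a \<le> b" "b \<le> ennreal D" "0 \<le> s"
  shows "ennreal (enn2real a powr s) \<le> ennreal (enn2real b powr s)"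
  using assms by (intro ennreal_leI powr_mono2 enn2real_mono) (auto simp: le_less_trans)

lemma hausdorff_measure_mono:
  assumes "A \<subseteq> B"
  shows "hausdorff_measure d s A \<le> hausdorff_measure d s B"
  unfolding hausdorff_measure_def hausdorff_content_def
proof (rule SUP_mono)
  fix \<delta> :: real assume "\<delta> \<in> {0<..}"
  then show "\<exists>m\<in>{0<..}. (INF C\<in>{C. A \<subseteq> (\<Union>i. C i) \<and> (\<forall>i. mdiam d (C i) \<le> ennreal \<delta>)}.
        \<Sum>i. ennreal (enn2real (mdiam d (C i)) powr s))
      \<le> (INF C\<in>{C. B \<subseteq> (\<Union>i. C i) \<and> (\<forall>i. mdiam d (C i) \<le> ennreal m)}.
        \<Sum>i. ennreal (enn2real (mdiam d (C i)) powr s))"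
    using assms by (intro bexI[of _ \<delta>] INF_superset_mono) auto
qed

lemma hausdorff_measure_image_le:
  assumes "\<And>x y. x \<in> A \<Longrightarrow> y \<in> A \<Longrightarrow> d' (\<phi> x) (\<phi> y) \<le> d x y" and "0 \<le> s"
  shows "hausdorff_measure d' s (\<phi> ` A) \<le> hausdorff_measure d s A"
  unfolding hausdorff_measure_def
proof (intro SUP_mono bexI)
  fix \<delta> :: real assume "\<delta> \<in> {0<..}"
  show "hausdorff_content d' s \<delta> (\<phi> ` A) \<le> hausdorff_content d s \<delta> A"
    unfolding hausdorff_content_def
  proof (intro INF_mono)
    fix C :: "nat \<Rightarrow> 'a set" assume C: "C \<in> {C. A \<subseteq> (\<Union>i. C i) \<and> (\<forall>i. mdiam d (C i) \<le> ennreal \<delta>)}"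
    define C' where "C' i = \<phi> ` (C i \<inter> A)" for i
    have mono: "mdiam d' (C' i) \<le> mdiam d (C i)" for i
      unfolding C'_def using assms(1) mdiam_image_le[of "C i \<inter> A" d' \<phi> d] mdiam_mono[of "C i \<inter> A" "C i" d]
      by force
    have "\<phi> ` A \<subseteq> (\<Union>i. C' i)"
    proof
      fix z assume "z \<in> \<phi> ` A"
      then obtain x i where "x \<in> A" "z = \<phi> x" "x \<in> C i"
        using C by blast
      then show "z \<in> (\<Union>i. C' i)"
        by (auto simp: C'_def)
    qed
    moreover have "mdiam d' (C' i) \<le> ennreal \<delta>" for i
      using order_trans[OF mono[of i]] C by auto
    ultimately have "C' \<in> {C. \<phi> ` A \<subseteq> (\<Union>i. C i) \<and> (\<forall>i. mdiam d' (C i) \<le> ennreal \<delta>)}"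
      by blast
    moreover have "(\<Sum>i. ennreal (enn2real (mdiam d' (C' i)) powr s))
        \<le> (\<Sum>i. ennreal (enn2real (mdiam d (C i)) powr s))"
      using C mono assms(2) by (intro suminf_le summableI ennreal_enn2real_powr_mono) auto
    ultimately show "\<exists>C'\<in>{C. \<phi> ` A \<subseteq> (\<Union>i. C i) \<and> (\<forall>i. mdiam d' (C i) \<le> ennreal \<delta>)}.
        (\<Sum>i. ennreal (enn2real (mdiam d' (C' i)) powr s))
          \<le> (\<Sum>i. ennreal (enn2real (mdiam d (C i)) powr s))"
      by blast
  qed
qed

lemma emeasure_lborel_rectangle:
  assumes "0 \<le> D" "0 \<le> E"
  shows "emeasure lborel ({a..a + D} \<times> {b..b + E} :: (real \<times> real) set) = ennreal (D * E)"
proof -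
  have "emeasure (lborel \<Otimes>\<^sub>M lborel) ({a..a + D} \<times> {b..b + E} :: (real \<times> real) set)
      = emeasure lborel {a..a + D} * emeasure lborel {b..b + E}"
    by (rule lborel.emeasure_pair_measure_Times) auto
  then show ?thesis
    using assms by (simp add: lborel_prod ennreal_mult)
qed

lemma emeasure_lborel_sheared_rectangle:
  fixes B a b D E :: real
  assumes "0 \<le> D" "0 \<le> E"
  shows "emeasure lborel {z :: real \<times> real. fst z \<in> {a..a + D} \<and> snd z - B * fst z \<in> {b..b + E}}
      = ennreal (D * E)"
proof -
  define P where "P = {z :: real \<times> real. fst z \<in> {a..a + D} \<and> snd z - B * fst z \<in> {b..b + E}}"
  have "closed P"
    unfolding P_def by (intro closed_Collect_conj closed_Collect_le continuous_intros) (simp_all add: atLeastAtMost_iff closed_Collect_conj closed_Collect_le continuous_intros)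
  then have "P \<in> sets lborel"
    by (simp add: borel_closed)
  then have "P \<in> sets (lborel \<Otimes>\<^sub>M lborel)"
    by (simp only: lborel_prod)
  then have "emeasure (lborel \<Otimes>\<^sub>M lborel) P = (\<integral>\<^sup>+x. emeasure lborel (Pair x -` P) \<partial>lborel)"
    by (rule lborel.emeasure_pair_measure_alt)
  also have "\<dots> = (\<integral>\<^sup>+x. ennreal E * indicator {a..a + D} x \<partial>lborel)"
  proof (intro nn_integral_cong)
    fix x
    have "Pair x -` P = (if x \<in> {a..a + D} then {b + B * x .. b + B * x + E} else {})"
      unfolding P_def by (auto simp: algebra_simps)
    then show "emeasure lborel (Pair x -` P) = ennreal E * indicator {a..a + D} x"
      using assms(2) by simp
  qed
  also have "\<dots> = ennreal E * emeasure lborel {a..a + D}"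
    by (rule nn_integral_cmult_indicator) simp
  finally show ?thesis
    using assms by (simp add: P_def lborel_prod ennreal_mult mult.commute)
qed

lemma subset_box_of_dpar_bounded:
  assumes "S \<noteq> {}" and D: "\<And>w w'. w \<in> S \<Longrightarrow> w' \<in> S \<Longrightarrow> dpar w w' \<le> D"
  shows "S \<subseteq> {Inf (fst ` S) .. Inf (fst ` S) + D} \<times> {Inf (snd ` S) .. Inf (snd ` S) + D\<^sup>2}"
proof
  fix w assume w: "w \<in> S"
  have near: "\<bar>fst w - fst w'\<bar> \<le> D" "\<bar>snd w - snd w'\<bar> \<le> D\<^sup>2" if "w' \<in> S" for w'
    using D[OF w that] by (auto simp: dpar_eq intro: sqrt_le_D)
  have lower: "fst w - D \<le> fst w'" "snd w - D\<^sup>2 \<le> snd w'" if "w' \<in> S" for w'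
    using near[OF that] by (auto simp: abs_le_iff)
  have "bdd_below (fst ` S)" "bdd_below (snd ` S)"
    by (metis bdd_belowI2 lower(1), metis bdd_belowI2 lower(2))
  then have "Inf (fst ` S) \<le> fst w" "Inf (snd ` S) \<le> snd w"
    using w by (auto intro: cInf_lower)
  moreover have "fst w - D \<le> Inf (fst ` S)" "snd w - D\<^sup>2 \<le> Inf (snd ` S)"
    using assms(1) by (auto intro!: cInf_greatest intro: lower)
  ultimately show "w \<in> {Inf (fst ` S) .. Inf (fst ` S) + D} \<times> {Inf (snd ` S) .. Inf (snd ` S) + D\<^sup>2}"
    by (cases w) auto
qed

lemma emeasure_le_sum_mdiam_cube:
  assumes cover: "P \<subseteq> (\<Union>i. C i)" and diam: "\<And>i. mdiam dpar (C i) \<le> ennreal D"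
  shows "emeasure lborel P \<le> (\<Sum>i. ennreal (enn2real (mdiam dpar (C i)) powr 3))"
proof -
  define d where "d i = enn2real (mdiam dpar (C i))" for i
  define R where "R i = (if C i \<inter> P = {} then {} else
    {Inf (fst ` (C i \<inter> P)) .. Inf (fst ` (C i \<inter> P)) + d i}
      \<times> {Inf (snd ` (C i \<inter> P)) .. Inf (snd ` (C i \<inter> P)) + (d i)\<^sup>2})" for i
  have CR: "C i \<inter> P \<subseteq> R i" for i
  proof (cases "C i \<inter> P = {}")
    case False
    have "dpar w w' \<le> d i" if "w \<in> C i \<inter> P" "w' \<in> C i \<inter> P" for w w'
      using that mdiam_le_imp_dist_le[OF _ _ diam[of i]] by (auto simp: d_def)
    then show ?thesis
      unfolding R_def if_not_P[OF False] by (rule subset_box_of_dpar_bounded[OF False])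
  qed (simp add: R_def)
  have "P \<subseteq> (\<Union>i. R i)"
  proof
    fix w assume "w \<in> P"
    moreover obtain i where "w \<in> C i"
      using cover \<open>w \<in> P\<close> by auto
    ultimately show "w \<in> (\<Union>i. R i)"
      using CR[of i] by auto
  qed
  moreover have R_sets: "R i \<in> sets lborel" for i
    unfolding R_def by (auto intro!: borel_closed closed_Times)
  ultimately have "emeasure lborel P \<le> emeasure lborel (\<Union>i. R i)"
    by (intro emeasure_mono) auto
  also have "\<dots> \<le> (\<Sum>i. emeasure lborel (R i))"
    using R_sets by (intro emeasure_subadditive_countably) auto
  also have "\<dots> \<le> (\<Sum>i. ennreal (d i powr 3))"
  proof (intro suminf_le summableI)
    fix i
    have "0 \<le> d i" by (simp add: d_def)
    then show "emeasure lborel (R i) \<le> ennreal (d i powr 3)"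
      by (simp add: R_def emeasure_lborel_rectangle powr_realpow power2_eq_square power3_eq_cube)
  qed
  finally show ?thesis
    by (simp add: d_def)
qed

lemma emeasure_le_hausdorff_measure_dpar:
  "emeasure lborel P \<le> hausdorff_measure dpar 3 P"
proof -
  have "emeasure lborel P \<le> hausdorff_content dpar 3 1 P"
    unfolding hausdorff_content_def
    by (rule INF_greatest, elim CollectE conjE) (rule emeasure_le_sum_mdiam_cube, blast+)
  also have "\<dots> \<le> hausdorff_measure dpar 3 P"
    unfolding hausdorff_measure_def by (rule SUP_upper) simp
  finally show ?thesis .
qed

lemma hausdorff_content_le_finite_cover:
  assumes "finite I" "A \<subseteq> (\<Union>i\<in>I. C i)" "\<And>i. i \<in> I \<Longrightarrow> mdiam d (C i) \<le> ennreal D"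
    and "0 \<le> D" "D \<le> \<delta>" "0 \<le> s"
  shows "hausdorff_content d s \<delta> A \<le> of_nat (card I) * ennreal (D powr s)"
proof -
  obtain h where h: "bij_betw h {0..<card I} I"
    using ex_bij_betw_nat_finite[OF assms(1)] by blast
  define C' where "C' n = (if n < card I then C (h n) else {})" for n
  have C'_empty: "ennreal (enn2real (mdiam d (C' n)) powr s) = 0" if "n \<notin> {..<card I}" for n
    using that by (simp add: C'_def mdiam_def bot_ennreal)
  have C'_term: "ennreal (enn2real (mdiam d (C' n)) powr s) \<le> ennreal (D powr s)" if "n < card I" for n
  proof -
    have "h n \<in> I"
      using that h by (auto simp: bij_betw_def)
    then have "ennreal (enn2real (mdiam d (C (h n))) powr s) \<le> ennreal (enn2real (ennreal D) powr s)"
      using assms(3,6) by (intro ennreal_enn2real_powr_mono) auto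
    then show ?thesis
      using that assms(4) by (simp add: C'_def)
  qed
  have "A \<subseteq> (\<Union>n. C' n)"
  proof
    fix x assume "x \<in> A"
    then obtain i where "i \<in> I" "x \<in> C i"
      using assms(2) by blast
    moreover obtain n where "n < card I" "h n = i"
      using h \<open>i \<in> I\<close> by (metis atLeastLessThan_iff bij_betw_iff_bijections)
    ultimately show "x \<in> (\<Union>n. C' n)"
      by (auto simp: C'_def)
  qed
  moreover have "mdiam d (C' n) \<le> ennreal \<delta>" for n
  proof (cases "n < card I")
    case True
    then have "h n \<in> I"
      using h by (auto simp: bij_betw_def)
    then show ?thesis
      using order_trans[OF assms(3) ennreal_leI[OF assms(5)]] True by (simp add: C'_def)
  qed (simp add: C'_def mdiam_def bot_ennreal)
  ultimately have "hausdorff_content d s \<delta> A \<le> (\<Sum>n. ennreal (enn2real (mdiam d (C' n)) powr s))"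
    unfolding hausdorff_content_def by (intro INF_lower) auto
  also have "\<dots> = (\<Sum>n<card I. ennreal (enn2real (mdiam d (C' n)) powr s))"
    by (rule suminf_finite) (auto simp: C'_empty)
  also have "\<dots> \<le> (\<Sum>n<card I. ennreal (D powr s))"
    by (intro sum_mono C'_term) simp
  finally show ?thesis
    by simp
qed

lemma exists_grid_interval:
  assumes "0 < h" "a \<le> y" "y < a + real N * h"
  shows "\<exists>i<N. a + real i * h \<le> y \<and> y < a + real (Suc i) * h"
proof -
  define i where "i = nat \<lfloor>(y - a) / h\<rfloor>"
  have "0 \<le> (y - a) / h" "(y - a) / h < real N"
    using assms by (simp_all add: field_simps)
  then have "real i \<le> (y - a) / h" "(y - a) / h < real i + 1" "i < N"
    unfolding i_def by linarith+
  then show ?thesis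
    using assms(1) by (intro exI[of _ i]) (simp add: field_simps)
qed

lemma hausdorff_content_dpar_rectangle_le:
  assumes "0 < r" "0 < N" "r / real N \<le> \<delta>"
  shows "hausdorff_content dpar 3 \<delta> ({a..<a + r} \<times> {b..<b + r\<^sup>2}) \<le> ennreal (r ^ 3)"
proof -
  define h where "h = r / real N"
  have h_pos: "0 < h"
    using assms by (simp add: h_def)
  define C where "C ij = {a + real (fst ij) * h ..< a + real (Suc (fst ij)) * h}
      \<times> {b + real (snd ij) * h\<^sup>2 ..< b + real (Suc (snd ij)) * h\<^sup>2}" for ij
  have "{a..<a + r} \<times> {b..<b + r\<^sup>2} \<subseteq> (\<Union>ij \<in> {..<N} \<times> {..<N\<^sup>2}. C ij)"
  proof clarify
    fix y t assume "y \<in> {a..<a + r}" "t \<in> {b..<b + r\<^sup>2}"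
    moreover have "r = real N * h" "r\<^sup>2 = real (N\<^sup>2) * h\<^sup>2"
      using assms(2) by (simp_all add: h_def power2_eq_square)
    ultimately obtain i j where "i < N" "j < N\<^sup>2" "(y, t) \<in> C (i, j)"
      using exists_grid_interval[OF h_pos, of a y N] exists_grid_interval[of "h\<^sup>2" b t "N\<^sup>2"] h_pos
      by (auto simp: C_def)
    then show "(y, t) \<in> (\<Union>ij \<in> {..<N} \<times> {..<N\<^sup>2}. C ij)"
      by blast
  qed
  moreover have "mdiam dpar (C ij) \<le> ennreal h" for ij
    unfolding mdiam_def
  proof (intro SUP_least ennreal_leI)
    fix w w' assume "w \<in> C ij" "w' \<in> C ij"
    then have "\<bar>fst w - fst w'\<bar> \<le> h" "\<bar>snd w - snd w'\<bar> \<le> h\<^sup>2"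
      by (auto simp: C_def algebra_simps)
    then show "dpar w w' \<le> h"
      using h_pos by (simp add: dpar_eq real_le_lsqrt)
  qed
  ultimately have "hausdorff_content dpar 3 \<delta> ({a..<a + r} \<times> {b..<b + r\<^sup>2})
      \<le> of_nat (card ({..<N} \<times> {..<N\<^sup>2})) * ennreal (h powr 3)"
    using h_pos assms(3) by (intro hausdorff_content_le_finite_cover) (auto simp: h_def)
  also have "\<dots> = ennreal (real (N * N\<^sup>2)) * ennreal (h ^ 3)"
    using h_pos by (simp add: card_cartesian_product powr_realpow ennreal_of_nat_eq_real_of_nat)
  also have "\<dots> = ennreal (real (N * N\<^sup>2) * h ^ 3)"
    using h_pos by (simp add: ennreal_mult)
  also have "real (N * N\<^sup>2) * h ^ 3 = r ^ 3"
    using assms(2) by (simp add: h_def power_divide power2_eq_square power3_eq_cube)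
  finally show ?thesis .
qed

lemma hausdorff_measure_dpar_rectangle_le:
  assumes "0 < r"
  shows "hausdorff_measure dpar 3 ({a..<a + r} \<times> {b..<b + r\<^sup>2}) \<le> ennreal (r ^ 3)"
  unfolding hausdorff_measure_def
proof (rule SUP_least)
  fix \<delta> :: real assume "\<delta> \<in> {0<..}"
  then have "0 < \<delta>"
    by simp
  obtain N :: nat where N: "r / \<delta> < real N"
    using reals_Archimedean2 by blast
  moreover have "0 < r / \<delta>"
    using assms \<open>0 < \<delta>\<close> by simp
  ultimately have "0 < real N"
    by linarith
  moreover have "r < real N * \<delta>"
    using N \<open>0 < \<delta>\<close> by (simp add: pos_divide_less_eq)
  ultimately have "0 < N" "r / real N \<le> \<delta>"
    by (simp_all add: pos_divide_le_eq mult.commute)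
  then show "hausdorff_content dpar 3 \<delta> ({a..<a + r} \<times> {b..<b + r\<^sup>2}) \<le> ennreal (r ^ 3)"
    using assms by (intro hausdorff_content_dpar_rectangle_le)
qed

section \<open>Projections of bilipschitz images\<close>

(* What the proof uses from beta_f(V; Q) < rho / l(Q): every horizontal slice of Q is mapped
   into the rho-neighbourhood of a single horizontal line of V. *)
definition slices_near_hlines :: "(wpt \<Rightarrow> heis) \<Rightarrow> heis set \<Rightarrow> wpt set \<Rightarrow> real \<Rightarrow> bool" where
  "slices_near_hlines f V Q \<rho> \<longleftrightarrow> (\<forall>t. \<exists>L. heis_hline L \<and> L \<subseteq> V \<and>
     (\<forall>w \<in> Q. snd w = t \<longrightarrow> (\<exists>q \<in> L. heis_dist (f w) q \<le> \<rho>)))"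

lemma slices_near_hlines_mono:
  assumes "slices_near_hlines f V Q \<rho>" "V \<subseteq> V'"
  shows "slices_near_hlines f V' Q \<rho>"
  unfolding slices_near_hlines_def
proof
  fix t
  obtain L where "heis_hline L" "L \<subseteq> V" "\<forall>w \<in> Q. snd w = t \<longrightarrow> (\<exists>q\<in>L. heis_dist (f w) q \<le> \<rho>)"
    using assms(1)[unfolded slices_near_hlines_def, rule_format, of t] by (elim exE conjE)
  moreover have "L \<subseteq> V'"
    using \<open>L \<subseteq> V\<close> assms(2) by (rule subset_trans)
  ultimately show "\<exists>L. heis_hline L \<and> L \<subseteq> V' \<and> (\<forall>w \<in> Q. snd w = t \<longrightarrow> (\<exists>q\<in>L. heis_dist (f w) q \<le> \<rho>))"
    by (intro exI[of _ L] conjI)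
qed

lemma slices_near_hlines_rot:
  assumes "slices_near_hlines f V Q \<rho>"
  shows "slices_near_hlines (rot \<theta> \<circ> f) (rot \<theta> ` V) Q \<rho>"
  unfolding slices_near_hlines_def
proof
  fix t
  obtain L where L: "heis_hline L" "L \<subseteq> V" "\<forall>w \<in> Q. snd w = t \<longrightarrow> (\<exists>q\<in>L. heis_dist (f w) q \<le> \<rho>)"
    using assms[unfolded slices_near_hlines_def, rule_format, of t] by (elim exE conjE)
  have "\<forall>w \<in> Q. snd w = t \<longrightarrow> (\<exists>q \<in> rot \<theta> ` L. heis_dist ((rot \<theta> \<circ> f) w) q \<le> \<rho>)"
  proof (intro ballI impI)
    fix w assume "w \<in> Q" "snd w = t"
    then obtain q where "q \<in> L" "heis_dist (f w) q \<le> \<rho>"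
      using L(3) by blast
    then show "\<exists>q \<in> rot \<theta> ` L. heis_dist ((rot \<theta> \<circ> f) w) q \<le> \<rho>"
      by (intro bexI[of _ "rot \<theta> q"]) (simp_all add: heis_dist_rot)
  qed
  then show "\<exists>L'. heis_hline L' \<and> L' \<subseteq> rot \<theta> ` V \<and>
      (\<forall>w \<in> Q. snd w = t \<longrightarrow> (\<exists>q \<in> L'. heis_dist ((rot \<theta> \<circ> f) w) q \<le> \<rho>))"
    by (intro exI[of _ "rot \<theta> ` L"] conjI heis_hline_rot[OF L(1)] image_mono[OF L(2)])
qed

lemma slice_flat_map_plane_chart:
  fixes g :: "wpt \<Rightarrow> heis"
  assumes M: "1 \<le> M" and r: "0 < r" and bl: "bilipschitz M g"
    and near: "slices_near_hlines g {p. fst p = B} ({y0..<y0 + r} \<times> {t0..<t0 + r\<^sup>2}) (r / (128 * M ^ 3))"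
  shows "slice_flat_map (plane_chart B \<circ> g) M r y0 t0"
proof
  define \<rho> where "\<rho> = r / (128 * M ^ 3)"
  have M_pos: "0 < M"
    using M by simp
  note upper = bilipschitzD(1)[OF bl M_pos] and lower = bilipschitzD(2)[OF bl M_pos]
  show "1 \<le> M" "0 < r" by (fact M, fact r)
  show "continuous_on UNIV (plane_chart B \<circ> g)"
    using continuous_on_lipschitz_into_heis[OF upper] continuous_on_plane_chart
    by (rule continuous_on_compose)
  show "\<bar>fst ((plane_chart B \<circ> g) w) - fst ((plane_chart B \<circ> g) w')\<bar> \<le> M * dpar w w'" for w w'
    using abs_fst_snd_diff_le_heis_dist[of "g w" "g w'"] upper[of w w'] by simp
  fix w w' assume w: "w \<in> {y0..<y0 + r} \<times> {t0..<t0 + r\<^sup>2}" and w': "w' \<in> {y0..<y0 + r} \<times> {t0..<t0 + r\<^sup>2}"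
  note near_slice = near[unfolded slices_near_hlines_def \<rho>_def[symmetric], rule_format]
  obtain L where L: "heis_hline L" "L \<subseteq> {p. fst p = B}"
    and L_near: "\<forall>v \<in> {y0..<y0 + r} \<times> {t0..<t0 + r\<^sup>2}. snd v = snd w \<longrightarrow> (\<exists>q\<in>L. heis_dist (g v) q \<le> \<rho>)"
    using near_slice[of "snd w"] by (elim exE conjE)
  obtain q where q: "q \<in> L" "heis_dist (g w) q \<le> \<rho>"
    using L_near w by blast
  show "dpar w w' \<le> M * dpar ((plane_chart B \<circ> g) w) ((plane_chart B \<circ> g) w') + r / (32 * M\<^sup>2)"
  proof -
    obtain L' where "L' \<subseteq> {p. fst p = B}"
      and "\<forall>v \<in> {y0..<y0 + r} \<times> {t0..<t0 + r\<^sup>2}. snd v = snd w' \<longrightarrow> (\<exists>q\<in>L'. heis_dist (g v) q \<le> \<rho>)"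
      using near_slice[of "snd w'"] by (elim exE conjE)
    then obtain q' where "L' \<subseteq> {p. fst p = B}" "q' \<in> L'" "heis_dist (g w') q' \<le> \<rho>"
      using w' by blast
    then have "heis_dist (g w) (g w') \<le> dpar (plane_chart B (g w)) (plane_chart B (g w')) + 4 * \<rho>"
      using q L(2) by (intro heis_dist_le_dpar_plane_chart) auto
    then have "M * heis_dist (g w) (g w') \<le> M * dpar (plane_chart B (g w)) (plane_chart B (g w')) + M * (4 * \<rho>)"
      using M_pos by (simp add: distrib_left[symmetric])
    moreover have "M * (4 * \<rho>) = r / (32 * M\<^sup>2)"
      using M_pos by (simp add: \<rho>_def power2_eq_square power3_eq_cube)
    ultimately show ?thesis
      using lower[of w w'] by simp
  qed
  assume "snd w = snd w'"
  then obtain q' where "q' \<in> L" "heis_dist (g w') q' \<le> \<rho>"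
    using L_near w' by auto
  moreover have "2 * \<rho> = r / (64 * M ^ 3)"
    by (simp add: \<rho>_def)
  ultimately show "\<bar>snd ((plane_chart B \<circ> g) w) - snd ((plane_chart B \<circ> g) w')\<bar> \<le> (r / (64 * M ^ 3))\<^sup>2"
    using plane_chart_snd_close_on_hline[OF L q(1) _ q(2)] by simp
qed

lemma hausdorff_measure_proj_Pi_image_ge:
  fixes g :: "wpt \<Rightarrow> heis"
  assumes M: "1 \<le> M" and r: "0 < r" and bl: "bilipschitz M g"
    and near: "slices_near_hlines g {p. fst p = B} ({y0..<y0 + r} \<times> {t0..<t0 + r\<^sup>2}) (r / (128 * M ^ 3))"
  shows "ennreal (r ^ 3 / (1024 * M ^ 7))
    \<le> hausdorff_measure heis_dist 3 (proj_Pi ` g ` ({y0..<y0 + r} \<times> {t0..<t0 + r\<^sup>2}))"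
proof -
  let ?Q = "{y0..<y0 + r} \<times> {t0..<t0 + r\<^sup>2}"
  interpret slice_flat_map "plane_chart B \<circ> g" M r y0 t0
    by (rule slice_flat_map_plane_chart[OF M r bl near])
  obtain Ys Ts where rect: "{Ys - r / (16 * M) .. Ys + r / (16 * M)} \<times> {Ts .. Ts + r\<^sup>2 / (128 * M ^ 6)}
      \<subseteq> (plane_chart B \<circ> g) ` ?Q"
    using rectangle_subset_image by blast
  define P where "P = {z :: real \<times> real. fst z \<in> {Ys - r / (16 * M) .. Ys - r / (16 * M) + r / (8 * M)}
      \<and> snd z - B * fst z \<in> {Ts .. Ts + r\<^sup>2 / (128 * M ^ 6)}}"
  have "emeasure lborel P = ennreal (r / (8 * M) * (r\<^sup>2 / (128 * M ^ 6)))"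
    unfolding P_def using r M by (intro emeasure_lborel_sheared_rectangle) auto
  also have "r / (8 * M) * (r\<^sup>2 / (128 * M ^ 6)) = r ^ 3 / (1024 * M ^ 7)"
    by (simp add: power2_eq_square power3_eq_cube power_Suc[symmetric] field_simps)
  finally have "ennreal (r ^ 3 / (1024 * M ^ 7)) \<le> hausdorff_measure dpar 3 P"
    using emeasure_le_hausdorff_measure_dpar[of P] by simp
  also have "P \<subseteq> plane_chart 0 ` proj_Pi ` g ` ?Q"
  proof
    fix z assume "z \<in> P"
    then have "(fst z, snd z - B * fst z) \<in> (plane_chart B \<circ> g) ` ?Q"
      using rect by (auto simp: P_def)
    then obtain w where w: "w \<in> ?Q" "plane_chart B (g w) = (fst z, snd z - B * fst z)"
      by auto
    then have "z = plane_chart 0 (proj_Pi (g w))"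
      using plane_chart_proj_Pi[of "g w" B] by (cases z) simp
    then show "z \<in> plane_chart 0 ` proj_Pi ` g ` ?Q"
      using w(1) by blast
  qed
  then have "hausdorff_measure dpar 3 P \<le> hausdorff_measure dpar 3 (plane_chart 0 ` proj_Pi ` g ` ?Q)"
    by (rule hausdorff_measure_mono)
  also have "\<dots> \<le> hausdorff_measure heis_dist 3 (proj_Pi ` g ` ?Q)"
    by (intro hausdorff_measure_image_le) (auto simp: heis_dist_plane_chart proj_Pi_def split: prod.splits)
  finally show ?thesis .
qed

lemma hausdorff_measure_proj_Pi_theta_image_ge:
  fixes f :: "wpt \<Rightarrow> heis"
  assumes M: "1 \<le> M" and r: "0 < r" and bl: "bilipschitz M f"
    and V: "vertical_plane V" "vplane_angle_W V \<theta> = 0"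
    and near: "slices_near_hlines f V ({y0..<y0 + r} \<times> {t0..<t0 + r\<^sup>2}) (r / (128 * M ^ 3))"
  shows "ennreal (r ^ 3 / (1024 * M ^ 7))
    \<le> hausdorff_measure heis_dist 3 (proj_Pi_theta \<theta> ` f ` ({y0..<y0 + r} \<times> {t0..<t0 + r\<^sup>2}))"
proof -
  let ?Q = "{y0..<y0 + r} \<times> {t0..<t0 + r\<^sup>2}"
  obtain B where B: "rot (-\<theta>) ` V \<subseteq> {p. fst p = B}"
    using vplane_angle_W_eq_0[OF V] by blast
  have "slices_near_hlines (rot (-\<theta>) \<circ> f) {p. fst p = B} ?Q (r / (128 * M ^ 3))"
    using slices_near_hlines_rot[OF near] B by (rule slices_near_hlines_mono)
  then have "ennreal (r ^ 3 / (1024 * M ^ 7))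
      \<le> hausdorff_measure heis_dist 3 (proj_Pi ` (rot (-\<theta>) \<circ> f) ` ?Q)"
    by (rule hausdorff_measure_proj_Pi_image_ge[OF M r bilipschitz_rot[OF bl]])
  also have "proj_Pi ` (rot (-\<theta>) \<circ> f) ` ?Q = rot (-\<theta>) ` proj_Pi_theta \<theta> ` f ` ?Q"
    by (simp add: image_image proj_Pi_theta_def rot_inverse)
  also have "hausdorff_measure heis_dist 3 (rot (-\<theta>) ` proj_Pi_theta \<theta> ` f ` ?Q)
      \<le> hausdorff_measure heis_dist 3 (proj_Pi_theta \<theta> ` f ` ?Q)"
    by (rule hausdorff_measure_image_le) (simp_all add: heis_dist_rot)
  finally show ?thesis .
qed

lemma side_len_pos: "0 < side_len n"
  by (simp add: side_len_def)

lemma dyadic_rect_eq: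
  "dyadic_rect k l n = {k * side_len n ..< k * side_len n + side_len n}
     \<times> {l * (side_len n)\<^sup>2 ..< l * (side_len n)\<^sup>2 + (side_len n)\<^sup>2}"
proof -
  have "(4::real) powr x = (2 powr x)\<^sup>2" for x
    using powr_mult[of 2 2 x] by (simp add: power2_eq_square)
  then show ?thesis
    unfolding dyadic_rect_def side_len_def by (simp add: algebra_simps)
qed

lemma beta_less_imp_slices_near_hlines:
  assumes "beta f V k l n < ereal \<epsilon>"
  shows "slices_near_hlines f V (dyadic_rect k l n) (\<epsilon> * side_len n)"
  unfolding slices_near_hlines_def
proof
  fix t
  obtain e where "e < \<epsilon>" and lines: "\<forall>t. \<exists>L. heis_hline L \<and> L \<subseteq> V \<and>
      f ` (W_hline t \<inter> dyadic_rect k l n) \<subseteq> heis_nbhd L (e * side_len n)"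
    using assms unfolding beta_def Inf_less_iff by auto
  then obtain L where L: "heis_hline L" "L \<subseteq> V"
    "f ` (W_hline t \<inter> dyadic_rect k l n) \<subseteq> heis_nbhd L (e * side_len n)"
    by blast
  have "\<exists>q\<in>L. heis_dist (f w) q \<le> \<epsilon> * side_len n" if "w \<in> dyadic_rect k l n" "snd w = t" for w
  proof -
    have "w \<in> W_hline t \<inter> dyadic_rect k l n"
      using that by (cases w) (auto simp: W_hline_def)
    then have "Inf ((\<lambda>q. heis_dist (f w) q) ` L) \<le> e * side_len n"
      using L(3) by (auto simp: heis_nbhd_def heis_setdist_def)
    also have "\<dots> < \<epsilon> * side_len n"
      using \<open>e < \<epsilon>\<close> side_len_pos by simp
    finally have "Inf ((\<lambda>q. heis_dist (f w) q) ` L) < \<epsilon> * side_len n" .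
    moreover have "L \<noteq> {}"
      using L(1) by (auto simp: heis_hline_def)
    ultimately obtain q where "q \<in> L" "heis_dist (f w) q < \<epsilon> * side_len n"
      using cInf_lessD[of "(\<lambda>q. heis_dist (f w) q) ` L"] by blast
    then show ?thesis
      by force
  qed
  then show "\<exists>L. heis_hline L \<and> L \<subseteq> V \<and> (\<forall>w \<in> dyadic_rect k l n. snd w = t \<longrightarrow>
      (\<exists>q\<in>L. heis_dist (f w) q \<le> \<epsilon> * side_len n))"
    using L(1,2) by blast
qed

theorem corollary5p5:
  fixes M :: real
  assumes "M \<ge> 1"
  shows "\<exists>\<delta>>0. \<exists>\<epsilon>>0. \<forall>(f :: wpt \<Rightarrow> heis) (\<theta> :: real) (V :: heis set) (k :: int) (l :: int) (n :: int).
           bilipschitz M f \<and> -(pi / 2) \<le> \<theta> \<and> \<theta> < pi / 2 \<and>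
           vertical_plane V \<and> vplane_angle_W V \<theta> = 0 \<and>
           beta f V k l n < ereal \<epsilon>
           \<longrightarrow> hausdorff_measure heis_dist 3 (proj_Pi_theta \<theta> ` f ` dyadic_rect k l n)
               \<ge> ennreal \<delta> * hausdorff_measure dpar 3 (dyadic_rect k l n)"
proof (intro exI conjI allI impI)
  show "0 < 1 / (1024 * M ^ 7)" "0 < 1 / (128 * M ^ 3)"
    using assms by simp_all
  fix f \<theta> V k l n
  assume "bilipschitz M f \<and> - (pi / 2) \<le> \<theta> \<and> \<theta> < pi / 2 \<and> vertical_plane V \<and>
    vplane_angle_W V \<theta> = 0 \<and> beta f V k l n < ereal (1 / (128 * M ^ 3))"
  then have bl: "bilipschitz M f" and V: "vertical_plane V" "vplane_angle_W V \<theta> = 0"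
    and beta: "beta f V k l n < ereal (1 / (128 * M ^ 3))"
    by blast+
  define r where "r = side_len n"
  have r: "0 < r" and Q: "dyadic_rect k l n = {k * r..<k * r + r} \<times> {l * r\<^sup>2..<l * r\<^sup>2 + r\<^sup>2}"
    unfolding r_def by (rule side_len_pos, rule dyadic_rect_eq)
  have "ennreal (1 / (1024 * M ^ 7)) * hausdorff_measure dpar 3 (dyadic_rect k l n)
      \<le> ennreal (1 / (1024 * M ^ 7)) * ennreal (r ^ 3)"
    unfolding Q using r by (intro mult_left_mono hausdorff_measure_dpar_rectangle_le) simp_all
  also have "\<dots> = ennreal (r ^ 3 / (1024 * M ^ 7))"
    using ennreal_mult[of "1 / (1024 * M ^ 7)" "r ^ 3"] assms r by simp
  also have "\<dots> \<le> hausdorff_measure heis_dist 3 (proj_Pi_theta \<theta> ` f ` dyadic_rect k l n)"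
    using beta_less_imp_slices_near_hlines[OF beta] unfolding Q r_def[symmetric]
    by (intro hausdorff_measure_proj_Pi_theta_image_ge[OF assms r bl V]) simp
  finally show "ennreal (1 / (1024 * M ^ 7)) * hausdorff_measure dpar 3 (dyadic_rect k l n)
      \<le> hausdorff_measure heis_dist 3 (proj_Pi_theta \<theta> ` f ` dyadic_rect k l n)" .
qed

end
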